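(* Let $(\Omega,\mathcal{F},\mathbb{P})$ be a nonatomic probability space and let $(\mathcal{X},\mathcal{X}^\ast)$ be a pair of law-invariant vector subspaces of $L^1$, each containing $L^\infty$, such that $XY\in L^1$ for all $X\in\mathcal{X}$ and $Y\in\mathcal{X}^\ast$. Let $\varphi:\mathcal{X}\to(-\infty,\infty]$ be proper, convex, $\sigma(\mathcal{X},\mathcal{X}^\ast)$-lower semicontinuous, law invariant, and translation invariant along the constant random variable $1$. Then the following statements are equivalent: (a) $\varphi$ is affine along some nonconstant $Z\in\mathcal{X}$; (b) $\varphi$ is translation invariant along some nonconstant $Z\in\mathcal{X}$; (c) there exists $a\in\mathbb{R}$ such that $\varphi(X)=a\,\mathbb{E}_{\mathbb{P}}[X]+\varphi(0)$ for every $X\in\mathcal{X}$.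
   Context: $L^0$ denotes the space of real random variables on $(\Omega,\mathcal{F},\mathbb{P})$ modulo almost-sure equality; real numbers are identified with a.s. constant random variables, and "nonconstant" means not a.s. constant. For $X,Y\in L^0$, $X\sim Y$ means same law under $\mathbb{P}$. A set $\mathcal{S}\subset L^0$ is law invariant if $X\in\mathcal{S}$ whenever $X\in L^0$ and $X\sim Y$ for some $Y\in\mathcal{S}$. $\sigma(\mathcal{X},\mathcal{X}^\ast)$ is the weakest linear topology on $\mathcal{X}$ for which $X\mapsto\mathbb{E}_{\mathbb{P}}[XY]$ is continuous for every $Y\in\mathcal{X}^\ast$. For $\varphi:\mathcal{X}\to(-\infty,\infty]$: $\mathrm{dom}(\varphi)=\{X:\varphi(X)<\infty\}$; proper means $\mathrm{dom}(\varphi)\neq\emptyset$; law invariant means $\varphi(X)=\varphi(Y)$ whenever $X\sim Y$; $\sigma(\mathcal{X},\mathcal{X}^\ast)$-lower semicontinuous means $\varphi(X)\le\liminf_\alpha\varphi(X_\alpha)$ for every net $X_\alpha\to X$ in $\sigma(\mathcal{X},\mathcal{X}^\ast)$. For a linear subspace $\mathcal{M}\subset\mathcal{X}$, $\varphi$ is affine along $\mathcal{M}$ if $\mathcal{M}\subset\mathrm{dom}(\varphi)$ and $Z\mapsto\varphi(Z)-\varphi(0)$ is linear on $\mathcal{M}$; translation invariant along $\mathcal{M}$ if it is affine along $\mathcal{M}$ and $\varphi(X+Z)=\varphi(X)+\varphi(Z)-\varphi(0)$ for all $X\in\mathcal{X}$, $Z\in\mathcal{M}$. "Along $Z$" means along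 $\mathrm{span}(Z)=\{mZ:m\in\mathbb{R}\}$. *)

theory Defs
  imports "HOL-Probability.Probability"
begin

text \<open>Random variables are represented by real-valued functions on the sample space;
  elements of L0 are Borel measurable functions, identified up to a.e. equality implicitly
  (all notions below are invariant under a.e. equality through law invariance).\<close>

definition nonatomic :: "'a measure \<Rightarrow> bool" where
  "nonatomic M \<longleftrightarrow> (\<forall>A\<in>sets M. 0 < measure M A \<longrightarrow>
      (\<exists>B\<in>sets M. B \<subseteq> A \<and> 0 < measure M B \<and> measure M B < measure M A))"

definition law_invariant_set :: "'a measure \<Rightarrow> ('a \<Rightarrow> real) set \<Rightarrow> bool" where
  "law_invariant_set M S \<longleftrightarrow> (\<forall>X Y. X \<in> borel_measurable M \<longrightarrow> Y \<in> S \<longrightarrow>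
      distr M borel X = distr M borel Y \<longrightarrow> X \<in> S)"

definition linear_subspace_rv :: "('a \<Rightarrow> real) set \<Rightarrow> bool" where
  "linear_subspace_rv S \<longleftrightarrow> (\<lambda>_. 0) \<in> S \<and>
     (\<forall>X\<in>S. \<forall>Y\<in>S. (\<lambda>\<omega>. X \<omega> + Y \<omega>) \<in> S) \<and> (\<forall>X\<in>S. \<forall>c::real. (\<lambda>\<omega>. c * X \<omega>) \<in> S)"

definition Linf :: "'a measure \<Rightarrow> ('a \<Rightarrow> real) set" where
  "Linf M = {X. X \<in> borel_measurable M \<and> (\<exists>C. AE \<omega> in M. \<bar>X \<omega>\<bar> \<le> C)}"

definition weak_top :: "'a measure \<Rightarrow> ('a \<Rightarrow> real) set \<Rightarrow> ('a \<Rightarrow> real) set \<Rightarrow> ('a \<Rightarrow> real) topology" where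
  "weak_top M XX XXs = topology (\<lambda>U. U \<subseteq> XX \<and> (\<forall>X\<in>U. \<exists>F \<epsilon>. finite F \<and> F \<subseteq> XXs \<and> \<epsilon> > 0 \<and>
      {X'\<in>XX. \<forall>Y\<in>F. \<bar>(\<integral>\<omega>. X' \<omega> * Y \<omega> \<partial>M) - (\<integral>\<omega>. X \<omega> * Y \<omega> \<partial>M)\<bar> < \<epsilon>} \<subseteq> U))"

text \<open>Lower semicontinuity w.r.t. a topology (neighbourhood form; equivalent to the net form).\<close>
definition lsc_wrt :: "'b topology \<Rightarrow> ('b \<Rightarrow> ereal) \<Rightarrow> bool" where
  "lsc_wrt T f \<longleftrightarrow> (\<forall>x\<in>topspace T. \<forall>c. c < f x \<longrightarrow>
      (\<exists>U. openin T U \<and> x \<in> U \<and> (\<forall>y\<in>U. c < f y)))"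

definition convex_on_rv :: "('a \<Rightarrow> real) set \<Rightarrow> (('a \<Rightarrow> real) \<Rightarrow> ereal) \<Rightarrow> bool" where
  "convex_on_rv XX \<phi> \<longleftrightarrow> (\<forall>X\<in>XX. \<forall>Y\<in>XX. \<forall>t::real. 0 < t \<and> t < 1 \<longrightarrow>
      \<phi> (\<lambda>\<omega>. t * X \<omega> + (1 - t) * Y \<omega>) \<le> ereal t * \<phi> X + ereal (1 - t) * \<phi> Y)"

definition law_invariant_fun :: "'a measure \<Rightarrow> ('a \<Rightarrow> real) set \<Rightarrow> (('a \<Rightarrow> real) \<Rightarrow> ereal) \<Rightarrow> bool" where
  "law_invariant_fun M XX \<phi> \<longleftrightarrow> (\<forall>X\<in>XX. \<forall>Y\<in>XX. distr M borel X = distr M borel Y \<longrightarrow> \<phi> X = \<phi> Y)"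

definition rv_span :: "('a \<Rightarrow> real) \<Rightarrow> ('a \<Rightarrow> real) set" where
  "rv_span Z = {(\<lambda>\<omega>. m * Z \<omega>) | m::real. True}"

definition affine_along :: "(('a \<Rightarrow> real) \<Rightarrow> ereal) \<Rightarrow> ('a \<Rightarrow> real) set \<Rightarrow> bool" where
  "affine_along \<phi> S \<longleftrightarrow> (\<forall>Z\<in>S. \<phi> Z < \<infinity>) \<and>
     (\<forall>U\<in>S. \<forall>V\<in>S. \<forall>a b::real.
        \<phi> (\<lambda>\<omega>. a * U \<omega> + b * V \<omega>) - \<phi> (\<lambda>_. 0)
          = ereal a * (\<phi> U - \<phi> (\<lambda>_. 0)) + ereal b * (\<phi> V - \<phi> (\<lambda>_. 0)))"

definition translation_invariant_along ::
  "('a \<Rightarrow> real) set \<Rightarrow> (('a \<Rightarrow> real) \<Rightarrow> ereal) \<Rightarrow> ('a \<Rightarrow> real) set \<Rightarrow> bool" where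
  "translation_invariant_along XX \<phi> S \<longleftrightarrow> affine_along \<phi> S \<and>
     (\<forall>X\<in>XX. \<forall>Z\<in>S. \<phi> (\<lambda>\<omega>. X \<omega> + Z \<omega>) = \<phi> X + \<phi> Z - \<phi> (\<lambda>_. 0))"

definition nonconstant_rv :: "'a measure \<Rightarrow> ('a \<Rightarrow> real) \<Rightarrow> bool" where
  "nonconstant_rv M Z \<longleftrightarrow> \<not> (\<exists>c. AE \<omega> in M. Z \<omega> = c)"

end

(*
  (b) => (a) is immediate, and (c) => (b) holds along every Z, in particular along a nonconstant
  indicator, which a nonatomic space carries. For (a) => (c), call d an affine direction of slope
  k if phi (t d) = phi 0 + t k for all real t. Convexity and lower semicontinuity upgrade this to
  phi (X + t d) = phi X + t k for every X: the convex combination of X with the far point (t/s) d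
  converges weakly to X + t d as s -> 0. Hence affine directions form a law-invariant linear
  space, which contains the constants with some slope a. Let A be the space of directions v of
  slope a E[v]. Rearrangements Z1, Z2 of a nonconstant affine direction Z have the same slope and
  mean, so Z1 - Z2 lies in A; on a nonatomic space such differences are detected by every nonzero
  Y of mean zero, so A is weakly dense. Since phi = phi 0 + a E on A, lower semicontinuity gives
  phi <= phi 0 + a E everywhere, and convexity between X and -X forces equality.
*)

theory Submission
  imports Defs
begin

section \<open>Events and uniform variables in nonatomic probability spaces\<close>

context prob_space
begin

lemma nonatomic_small_event:
  assumes "nonatomic M" and "A \<in> events" "0 < prob A" and "0 < e"
  shows "\<exists>B\<in>events. B \<subseteq> A \<and> 0 < prob B \<and> prob B < e"
proof -
  have halving: "\<exists>B\<in>events. B \<subseteq> A \<and> 0 < prob B \<and> prob B \<le> prob A / 2^n" for n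
  proof (induction n)
    case 0
    then show ?case using assms by auto
  next
    case (Suc n)
    then obtain B where B: "B \<in> events" "B \<subseteq> A" "0 < prob B" "prob B \<le> prob A / 2^n"
      by auto
    then obtain B' where B': "B' \<in> events" "B' \<subseteq> B" "0 < prob B'" "prob B' < prob B"
      using \<open>nonatomic M\<close> unfolding nonatomic_def by blast
    have "prob (B - B') = prob B - prob B'"
      using B B' by (simp add: finite_measure_Diff)
    then show ?case
    proof (cases "prob B' \<le> prob B / 2")
      case True
      then show ?thesis using B B' by (intro bexI[of _ B']) auto
    next
      case False
      then show ?thesis using B B' \<open>prob (B - B') = _\<close> by (intro bexI[of _ "B - B'"]) auto
    qed
  qed
  obtain n where "prob A / e < 2^n"
    using real_arch_pow[of 2 "prob A / e"] by auto
  then have "prob A / 2^n < e"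
    using \<open>0 < e\<close> by (simp add: field_simps)
  then show ?thesis
    using halving[of n] by (meson le_less_trans)
qed

lemma greedy_enlargement:
  assumes "S \<in> events" "T \<in> events" "T \<subseteq> S" "prob T \<le> x"
  shows "\<exists>T'\<in>events. T \<subseteq> T' \<and> T' \<subseteq> S \<and> prob T' \<le> x \<and>
    (\<forall>D\<in>events. D \<subseteq> S - T \<longrightarrow> prob D \<le> x - prob T \<longrightarrow> prob D \<le> 2 * (prob T' - prob T))"
proof -
  define admissible where "admissible = {D \<in> events. D \<subseteq> S - T \<and> prob D \<le> x - prob T}"
  define gain where "gain = Sup (prob ` admissible)"
  have "{} \<in> admissible"
    using assms by (auto simp: admissible_def)
  have bdd: "bdd_above (prob ` admissible)"
    by (intro bdd_aboveI[of _ 1]) auto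
  obtain C where C: "C \<in> admissible" "gain \<le> 2 * prob C"
  proof (cases "gain \<le> 0")
    case True
    then show ?thesis using that \<open>{} \<in> admissible\<close> by auto
  next
    case False
    then obtain p where "p \<in> prob ` admissible" "gain / 2 < p"
      using less_cSup_iff[OF _ bdd, of "gain / 2"] \<open>{} \<in> admissible\<close>
      unfolding gain_def by force
    then show ?thesis using that by force
  qed
  have "prob (T \<union> C) = prob T + prob C"
    using C assms by (intro finite_measure_Union) (auto simp: admissible_def)
  moreover have "prob D \<le> 2 * prob C" if "D \<in> admissible" for D
  proof -
    have "prob D \<le> gain"
      unfolding gain_def using that bdd by (intro cSup_upper) auto
    then show ?thesis using C(2) by linarith
  qed
  ultimately show ?thesis
    using C assms unfolding admissible_def by (intro bexI[of _ "T \<union> C"]) auto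
qed

lemma greedy_sequence:
  assumes "S \<in> events" "0 \<le> x"
  obtains B where "incseq B" "\<And>n. B n \<in> events \<and> B n \<subseteq> S \<and> prob (B n) \<le> x"
    and "\<And>n D. D \<in> events \<Longrightarrow> D \<subseteq> S - B n \<Longrightarrow> prob D \<le> x - prob (B n) \<Longrightarrow>
      prob D \<le> 2 * (prob (B (Suc n)) - prob (B n))"
proof -
  let ?good = "\<lambda>T. T \<in> events \<and> T \<subseteq> S \<and> prob T \<le> x"
  have "\<exists>T'. ?good T \<longrightarrow> ?good T' \<and> T \<subseteq> T' \<and>
      (\<forall>D\<in>events. D \<subseteq> S - T \<longrightarrow> prob D \<le> x - prob T \<longrightarrow> prob D \<le> 2 * (prob T' - prob T))" for T
    using greedy_enlargement[OF \<open>S \<in> events\<close>, of T x] by blast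
  then obtain step where step: "\<And>T. ?good T \<Longrightarrow> ?good (step T) \<and> T \<subseteq> step T \<and>
      (\<forall>D\<in>events. D \<subseteq> S - T \<longrightarrow> prob D \<le> x - prob T \<longrightarrow> prob D \<le> 2 * (prob (step T) - prob T))"
    by (metis (no_types))
  define B where "B n = (step ^^ n) {}" for n
  have B_Suc: "B (Suc n) = step (B n)" for n
    by (simp add: B_def)
  have good: "?good (B n)" for n
  proof (induction n)
    case 0
    then show ?case using assms by (simp add: B_def)
  next
    case (Suc n)
    then show ?case using step[OF Suc] by (simp only: B_Suc)
  qed
  have "incseq B"
    by (intro incseq_SucI) (use step[OF good] in \<open>simp only: B_Suc\<close>)
  with good show ?thesis
    using step[OF good] by (intro that) (auto simp only: B_Suc)
qed

lemma nonatomic_event_with_prob: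
  assumes "nonatomic M" and "S \<in> events" and "0 \<le> x" "x \<le> prob S"
  shows "\<exists>B\<in>events. B \<subseteq> S \<and> prob B = x"
proof -
  obtain B where "incseq B" and good: "\<And>n. B n \<in> events \<and> B n \<subseteq> S \<and> prob (B n) \<le> x"
    and step: "\<And>n D. D \<in> events \<Longrightarrow> D \<subseteq> S - B n \<Longrightarrow> prob D \<le> x - prob (B n) \<Longrightarrow>
      prob D \<le> 2 * (prob (B (Suc n)) - prob (B n))"
    using greedy_sequence[OF \<open>S \<in> events\<close> \<open>0 \<le> x\<close>] by blast
  define B_lim where "B_lim = (\<Union>n. B n)"
  have B_lim: "B_lim \<in> events" "B_lim \<subseteq> S"
    using good by (auto simp: B_lim_def)
  have lim: "(\<lambda>n. prob (B n)) \<longlonglongrightarrow> prob B_lim"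
    unfolding B_lim_def using good \<open>incseq B\<close> by (intro finite_Lim_measure_incseq) auto
  have "prob B_lim \<le> x"
    using good by (intro LIMSEQ_le_const2[OF lim]) auto
  show ?thesis
  proof (rule ccontr)
    assume "\<not> ?thesis"
    then have "prob B_lim < x"
      using B_lim \<open>prob B_lim \<le> x\<close> by force
    moreover have "prob (S - B_lim) = prob S - prob B_lim"
      using assms B_lim by (simp add: finite_measure_Diff)
    ultimately obtain D where D: "D \<in> events" "D \<subseteq> S - B_lim" "0 < prob D" "prob D < x - prob B_lim"
      using nonatomic_small_event[OF \<open>nonatomic M\<close>, of "S - B_lim" "x - prob B_lim"] assms B_lim by auto
    \<comment> \<open>\<open>D\<close> remains an admissible enlargement at every stage, so each step gains \<open>prob D / 2\<close>.\<close>
    have gain: "prob D \<le> 2 * (prob (B (Suc n)) - prob (B n))" for n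
    proof (rule step[OF D(1)])
      have "prob (B n) \<le> prob B_lim"
        using good B_lim by (intro finite_measure_mono) (auto simp: B_lim_def)
      then show "D \<subseteq> S - B n" "prob D \<le> x - prob (B n)"
        using D by (auto simp: B_lim_def)
    qed
    have linear_growth: "real n * prob D \<le> 2 * prob (B n)" for n
    proof (induction n)
      case (Suc n)
      then show ?case using gain[of n] by (simp add: algebra_simps)
    qed simp
    obtain n where "2 / prob D < real n"
      using reals_Archimedean2 by blast
    then have "2 < 2 * prob (B n)"
      using linear_growth[of n] D(3) by (simp add: divide_less_eq)
    then show False
      using prob_le_1[of "B n"] by linarith
  qed
qed

lemma nonatomic_nonconstant_Linf:
  assumes "nonatomic M"
  obtains Z where "Z \<in> Linf M" "nonconstant_rv M Z"
proof -
  obtain B where B: "B \<in> events" "0 < prob B" "prob B < 1"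
    using assms unfolding nonatomic_def by (metis prob_space sets.top zero_less_one)
  have "indicator B \<in> Linf M"
    unfolding Linf_def using B(1) by (auto intro!: exI[of _ 1] simp: indicator_def)
  moreover have "nonconstant_rv M (indicator B)"
    unfolding nonconstant_rv_def
  proof
    assume "\<exists>c. AE \<omega> in M. indicator B \<omega> = (c::real)"
    then obtain c where c: "AE \<omega> in M. indicator B \<omega> = (c::real)"
      by blast
    show False
    proof (cases "c = 1")
      case True
      have "AE \<omega> in M. \<omega> \<in> B"
        using c by eventually_elim (use True in \<open>auto simp: indicator_def split: if_splits\<close>)
      then have "prob (space M - B) = 0"
        using AE_iff_measurable[of "space M - B" M "\<lambda>\<omega>. \<omega> \<in> B"] B(1) by (auto simp: emeasure_eq_measure)
      then show False
        using prob_compl[OF B(1)] B(3) by simp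
    next
      case False
      have "AE \<omega> in M. \<omega> \<notin> B"
        using c by eventually_elim (use False in \<open>auto simp: indicator_def split: if_splits\<close>)
      then have "prob B = 0"
        using AE_iff_measurable[of B M "\<lambda>\<omega>. \<omega> \<notin> B"] B(1) sets.sets_into_space
        by (auto simp: emeasure_eq_measure)
      then show False
        using B(2) by simp
    qed
  qed
  ultimately show ?thesis
    using that by blast
qed

end

lemma const_in_Linf: "(\<lambda>_. c) \<in> Linf M"
  unfolding Linf_def by (auto intro!: exI[of _ "\<bar>c\<bar>"])

definition uniform_on :: "'a measure \<Rightarrow> 'a set \<Rightarrow> ('a \<Rightarrow> real) \<Rightarrow> bool" where
  "uniform_on M C V \<longleftrightarrow> C \<in> sets M \<and> V \<in> borel_measurable M \<and> (\<forall>\<omega>\<in>space M. 0 \<le> V \<omega> \<and> V \<omega> \<le> 1) \<and>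
     (\<forall>x\<in>{0..1}. measure M (C \<inter> {\<omega>\<in>space M. V \<omega> \<le> x}) = x * measure M C)"

text \<open>For a halving operator \<open>h\<close>, the set \<open>dyadic_sets h C n k\<close> has probability \<open>k / 2^n\<close>
  times that of \<open>C\<close>; level \<open>n + 1\<close> refines level \<open>n\<close> by halving each difference of
  consecutive sets.\<close>

primrec dyadic_sets :: "('a set \<Rightarrow> 'a set) \<Rightarrow> 'a set \<Rightarrow> nat \<Rightarrow> nat \<Rightarrow> 'a set" where
  "dyadic_sets h C 0 k = (if k = 0 then {} else C)"
| "dyadic_sets h C (Suc n) k =
     (if even k then dyadic_sets h C n (k div 2)
      else dyadic_sets h C n (k div 2) \<union>
        h (dyadic_sets h C n (k div 2 + 1) - dyadic_sets h C n (k div 2)))"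

lemma dyadic_sets_rescale: "dyadic_sets h C (m + j) (c * 2^j) = dyadic_sets h C m c"
  by (induction j) (auto simp: mult.assoc[symmetric])

context prob_space
begin

context
  fixes h :: "'a set \<Rightarrow> 'a set" and C :: "'a set"
  assumes halving: "\<And>S. S \<in> events \<Longrightarrow> h S \<in> events \<and> h S \<subseteq> S \<and> prob (h S) = prob S / 2"
    and C: "C \<in> events"
begin

lemma dyadic_sets_in_events: "dyadic_sets h C n k \<in> events \<and> dyadic_sets h C n k \<subseteq> C"
proof (induction n arbitrary: k)
  case 0
  then show ?case using C by auto
next
  case (Suc n)
  let ?D = "dyadic_sets h C n (k div 2 + 1) - dyadic_sets h C n (k div 2)"
  have "h ?D \<in> events \<and> h ?D \<subseteq> ?D"
    using halving Suc by blast
  then show ?case using Suc by auto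
qed

lemma dyadic_sets_top: "2^n \<le> k \<Longrightarrow> dyadic_sets h C n k = C"
proof (induction n arbitrary: k)
  case (Suc n)
  then have "dyadic_sets h C n (k div 2) = C" "dyadic_sets h C n (k div 2 + 1) = C"
    by auto
  moreover have "h {} = {}"
    using halving[of "{}"] by auto
  ultimately show ?case by simp
qed simp

lemma dyadic_sets_Suc: "dyadic_sets h C n k \<subseteq> dyadic_sets h C n (Suc k)"
proof (induction n arbitrary: k)
  case (Suc n)
  show ?case
  proof (cases "even k")
    case False
    then have "Suc k div 2 = k div 2 + 1" "even (Suc k)"
      by presburger+
    moreover have "h (dyadic_sets h C n (k div 2 + 1) - dyadic_sets h C n (k div 2))
        \<subseteq> dyadic_sets h C n (k div 2 + 1) - dyadic_sets h C n (k div 2)"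
      using halving dyadic_sets_in_events by blast
    ultimately show ?thesis
      using False Suc[of "k div 2"] by auto
  qed simp
qed simp

lemma dyadic_sets_mono: "k \<le> k' \<Longrightarrow> dyadic_sets h C n k \<subseteq> dyadic_sets h C n k'"
  by (induction k' rule: dec_induct) (use dyadic_sets_Suc in blast)+

lemma dyadic_sets_mono_ratio:
  assumes "c * 2^n \<le> k * 2^m"
  shows "dyadic_sets h C m c \<subseteq> dyadic_sets h C n k"
proof -
  have "dyadic_sets h C m c = dyadic_sets h C (m + n) (c * 2^n)"
    by (simp add: dyadic_sets_rescale)
  also have "\<dots> \<subseteq> dyadic_sets h C (m + n) (k * 2^m)"
    using assms by (rule dyadic_sets_mono)
  also have "\<dots> = dyadic_sets h C n k"
    using dyadic_sets_rescale[of h C n m k] by (simp add: add.commute)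
  finally show ?thesis .
qed

lemma prob_dyadic_sets: "k \<le> 2^n \<Longrightarrow> prob (dyadic_sets h C n k) = real k / 2^n * prob C"
proof (induction n arbitrary: k)
  case 0
  then show ?case by (cases k) auto
next
  case (Suc n)
  show ?case
  proof (cases "even k")
    case True
    then show ?thesis using Suc by (auto elim!: evenE)
  next
    case False
    then obtain m where k: "k = 2 * m + 1"
      using oddE by blast
    let ?E = "dyadic_sets h C n"
    let ?D = "?E (m + 1) - ?E m"
    have "?E m \<in> events" "?E (m + 1) \<in> events" "?E m \<subseteq> ?E (m + 1)"
      using dyadic_sets_in_events dyadic_sets_Suc by auto
    moreover have "m + 1 \<le> 2^n"
      using Suc.prems k by simp
    ultimately have "prob ?D = prob C / 2^n"
      using Suc.IH[of m] Suc.IH[of "m + 1"] by (simp add: finite_measure_Diff field_simps)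
    moreover have "h ?D \<in> events" "h ?D \<subseteq> ?D" "prob (h ?D) = prob ?D / 2"
      using halving[of ?D] \<open>?E m \<in> events\<close> \<open>?E (m + 1) \<in> events\<close> by auto
    ultimately have half: "prob (h ?D) = prob C / 2 ^ Suc n"
      by simp
    have "prob (dyadic_sets h C (Suc n) k) = prob (?E m) + prob (h ?D)"
      using k \<open>?E m \<in> events\<close> \<open>h ?D \<in> events\<close> \<open>h ?D \<subseteq> ?D\<close>
      by (simp, intro finite_measure_Union) auto
    then show ?thesis
      using Suc.IH[of m] \<open>m + 1 \<le> 2^n\<close> half k by (simp add: field_simps)
  qed
qed

end

text \<open>\<open>E n k\<close> plays the role of the event \<open>{V \<le> k / 2^n}\<close> for a variable \<open>V\<close> that is
  uniform on \<open>C\<close>.\<close>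

definition dyadic_family :: "'a set \<Rightarrow> (nat \<Rightarrow> nat \<Rightarrow> 'a set) \<Rightarrow> bool" where
  "dyadic_family C E \<longleftrightarrow> (\<forall>n k. E n k \<in> events \<and> E n k \<subseteq> C) \<and> (\<forall>n k. 2^n \<le> k \<longrightarrow> E n k = C) \<and>
    (\<forall>m c n k. c * 2^n \<le> k * 2^m \<longrightarrow> E m c \<subseteq> E n k) \<and>
    (\<forall>n k. k \<le> 2^n \<longrightarrow> prob (E n k) = real k / 2^n * prob C)"

lemma nonatomic_dyadic_family:
  assumes "nonatomic M" and "C \<in> events"
  obtains E where "dyadic_family C E"
proof -
  have "\<exists>B\<in>events. B \<subseteq> S \<and> prob B = prob S / 2" if "S \<in> events" for S
    using nonatomic_event_with_prob[OF \<open>nonatomic M\<close> that, of "prob S / 2"] by simp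
  then obtain h where "\<And>S. S \<in> events \<Longrightarrow> h S \<in> events \<and> h S \<subseteq> S \<and> prob (h S) = prob S / 2"
    by metis
  from dyadic_sets_in_events[OF this assms(2)] dyadic_sets_top[OF this assms(2)]
    dyadic_sets_mono_ratio[OF this assms(2)] prob_dyadic_sets[OF this assms(2)]
  have "dyadic_family C (dyadic_sets h C)"
    unfolding dyadic_family_def by blast
  then show ?thesis ..
qed

lemma dyadic_family_mono: "dyadic_family C E \<Longrightarrow> mono (E n)"
  unfolding dyadic_family_def mono_def by (metis mult_le_mono1)

end

text \<open>For \<open>\<omega> \<in> C\<close> and \<open>E n\<close> increasing, the least \<open>k\<close> with \<open>\<omega> \<in> E n k\<close>.\<close>

definition dyadic_count :: "(nat \<Rightarrow> nat \<Rightarrow> 'a set) \<Rightarrow> 'a set \<Rightarrow> nat \<Rightarrow> 'a \<Rightarrow> nat" where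
  "dyadic_count E C n \<omega> = card {j. j < 2^n \<and> \<omega> \<in> C - E n j}"

lemma dyadic_count_le:
  assumes "mono (E n)" "\<omega> \<in> E n k"
  shows "dyadic_count E C n \<omega> \<le> k"
proof -
  have "{j. j < 2^n \<and> \<omega> \<in> C - E n j} \<subseteq> {..<k}"
    using assms by (auto simp: not_less dest: monoD)
  then show ?thesis
    unfolding dyadic_count_def by (metis card_lessThan card_mono finite_lessThan)
qed

lemma dyadic_count_le_pow: "dyadic_count E C n \<omega> \<le> 2^n"
proof -
  have "{j. j < 2^n \<and> \<omega> \<in> C - E n j} \<subseteq> {..<2^n}"
    by auto
  then show ?thesis
    unfolding dyadic_count_def by (metis card_lessThan card_mono finite_lessThan)
qed

lemma mem_dyadic_count:
  assumes "mono (E n)" "E n (2^n) = C" "\<omega> \<in> C"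
  shows "\<omega> \<in> E n (dyadic_count E C n \<omega>)"
proof (rule ccontr)
  assume out: "\<omega> \<notin> E n (dyadic_count E C n \<omega>)"
  have "dyadic_count E C n \<omega> < 2^n"
  proof (rule ccontr)
    assume "\<not> dyadic_count E C n \<omega> < 2^n"
    then have "E n (2^n) \<subseteq> E n (dyadic_count E C n \<omega>)"
      using assms(1) by (simp add: monoD)
    then show False
      using out assms(2,3) by blast
  qed
  then have "{..dyadic_count E C n \<omega>} \<subseteq> {j. j < 2^n \<and> \<omega> \<in> C - E n j}"
    using out assms(1,3) by (auto dest: monoD)
  then have "card {..dyadic_count E C n \<omega>} \<le> dyadic_count E C n \<omega>"
    unfolding dyadic_count_def by (intro card_mono) auto
  then show False
    by simp
qed

lemma borel_measurable_dyadic_count: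
  assumes "C \<in> sets M" "\<And>k. E n k \<in> sets M"
  shows "(\<lambda>\<omega>. real (dyadic_count E C n \<omega>)) \<in> borel_measurable M"
proof -
  have "real (dyadic_count E C n \<omega>) = (\<Sum>j<2^n. indicator (C - E n j) \<omega>)" for \<omega>
  proof -
    have "(\<Sum>j<2^n. indicator (C - E n j) \<omega> :: real) = real (card ({..<2^n} \<inter> {j. \<omega> \<in> C - E n j}))"
      by (simp add: indicator_def sum.If_cases)
    then show ?thesis
      unfolding dyadic_count_def by (simp add: Int_def conj_commute)
  qed
  then show ?thesis
    using assms by (auto intro!: borel_measurable_sum borel_measurable_indicator)
qed

context prob_space
begin

lemma dyadic_family_rank:
  assumes "dyadic_family C E"
  obtains V where "V \<in> borel_measurable M" "\<And>\<omega>. 0 \<le> V \<omega> \<and> V \<omega> \<le> 1"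
    and "\<And>\<omega> n k. \<omega> \<in> E n k \<Longrightarrow> V \<omega> \<le> real k / 2^n"
    and "\<And>\<omega> n k. \<omega> \<in> C \<Longrightarrow> V \<omega> < real k / 2^n \<Longrightarrow> \<omega> \<in> E n k"
proof -
  have E: "\<And>n k. E n k \<in> events" "\<And>n. E n (2^n) = C" "\<And>n. mono (E n)"
    and ratio: "\<And>m c n k. c * 2^n \<le> k * 2^m \<Longrightarrow> E m c \<subseteq> E n k"
    using assms dyadic_family_mono by (auto simp: dyadic_family_def)
  have "C \<in> events"
    using E(1,2) by metis
  define g where "g n \<omega> = real (dyadic_count E C n \<omega>) / 2^n" for n \<omega>
  define V where "V \<omega> = (INF n. g n \<omega>)" for \<omega>
  have bdd: "bdd_below (range (\<lambda>n. g n \<omega>))" for \<omega>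
    by (intro bdd_belowI[of _ 0]) (auto simp: g_def)
  have V_le_g: "V \<omega> \<le> g n \<omega>" for n \<omega>
    unfolding V_def by (rule cINF_lower[OF bdd]) auto
  show ?thesis
  proof
    show "V \<in> borel_measurable M"
      unfolding V_def g_def
      using borel_measurable_dyadic_count[OF \<open>C \<in> events\<close> E(1)] by measurable
    show "0 \<le> V \<omega> \<and> V \<omega> \<le> 1" for \<omega>
      using V_le_g[of \<omega> 0] dyadic_count_le_pow[of E C 0 \<omega>]
      unfolding V_def g_def by (auto intro: cINF_greatest)
    show "V \<omega> \<le> real k / 2^n" if "\<omega> \<in> E n k" for \<omega> n k
      using V_le_g[of \<omega> n] dyadic_count_le[where E = E and n = n, OF E(3) that] unfolding g_def
      by (smt (verit) divide_right_mono of_nat_mono zero_le_power)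
    show "\<omega> \<in> E n k" if "\<omega> \<in> C" and less: "V \<omega> < real k / 2^n" for \<omega> n k
    proof -
      obtain m where "g m \<omega> < real k / 2^n"
        using less unfolding V_def by (subst (asm) cInf_less_iff) (auto intro: bdd)
      then have "real (dyadic_count E C m \<omega> * 2^n) < real (k * 2^m)"
        unfolding g_def by (simp add: field_simps)
      then have "dyadic_count E C m \<omega> * 2^n \<le> k * 2^m"
        by linarith
      then show ?thesis
        using ratio[of "dyadic_count E C m \<omega>" n k m] mem_dyadic_count[where E = E and n = m, OF E(3) E(2) \<open>\<omega> \<in> C\<close>] by auto
    qed
  qed
qed

lemma dyadic_family_bracket:
  assumes E: "dyadic_family C E" and V: "V \<in> borel_measurable M"
    and V_le: "\<And>\<omega> n k. \<omega> \<in> E n k \<Longrightarrow> V \<omega> \<le> real k / 2^n"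
    and V_less: "\<And>\<omega> n k. \<omega> \<in> C \<Longrightarrow> V \<omega> < real k / 2^n \<Longrightarrow> \<omega> \<in> E n k"
    and x: "0 \<le> x" "x \<le> 1"
  shows "\<bar>prob (C \<inter> {\<omega>\<in>space M. V \<omega> \<le> x}) - x * prob C\<bar> \<le> prob C / 2^n"
proof -
  let ?S = "C \<inter> {\<omega>\<in>space M. V \<omega> \<le> x}"
  have events: "\<And>n k. E n k \<in> events \<and> E n k \<subseteq> C" and top: "\<And>k. 2^n \<le> k \<Longrightarrow> E n k = C"
    and prob_E: "\<And>k. k \<le> 2^n \<Longrightarrow> prob (E n k) = real k / 2^n * prob C"
    using E by (auto simp: dyadic_family_def)
  define k where "k = nat \<lfloor>x * 2^n\<rfloor>"
  have "real k \<le> x * 2^n" "x * 2^n < real k + 1"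
    using x unfolding k_def by simp_all
  then have k: "real k / 2^n \<le> x" "x < real (k + 1) / 2^n"
    by (simp_all add: divide_le_eq less_divide_eq)
  have "x * 2^n \<le> 2^n"
    using x by simp
  then have "real k \<le> 2^n"
    using \<open>real k \<le> x * 2^n\<close> by linarith
  then have "k \<le> 2^n"
    by (metis of_nat_le_iff of_nat_numeral of_nat_power)
  have "C \<in> events"
    using events[of n "2^n"] top[of "2^n"] by simp
  then have "?S \<in> events"
    using V by measurable
  have "E n k \<subseteq> ?S"
    using events[of n k] sets.sets_into_space V_le[of _ n k] k(1) by fastforce
  then have lower: "real k / 2^n * prob C \<le> prob ?S"
    using prob_E[OF \<open>k \<le> 2^n\<close>] finite_measure_mono \<open>?S \<in> events\<close> by metis
  have "?S \<subseteq> E n (k + 1)"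
    using k(2) by (auto intro!: V_less)
  then have S_le: "prob ?S \<le> prob (E n (k + 1))"
    using events by (intro finite_measure_mono) auto
  have upper: "prob ?S \<le> real (k + 1) / 2^n * prob C"
  proof (cases "k + 1 \<le> 2^n")
    case True
    then show ?thesis using S_le prob_E by simp
  next
    case False
    then have "(2::real)^n \<le> real (k + 1)"
      using of_nat_le_iff[of "2^n" "k + 1", where 'a = real] by simp
    then have "1 \<le> real (k + 1) / 2^n"
      by simp
    then have "1 * prob C \<le> real (k + 1) / 2^n * prob C"
      by (rule mult_right_mono) simp
    then show ?thesis using S_le top[of "k + 1"] False by simp
  qed
  have "real k / 2^n * prob C \<le> x * prob C" "x * prob C \<le> real (k + 1) / 2^n * prob C"
    using k by (intro mult_right_mono; simp)+
  with lower upper show ?thesis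
    by (simp add: field_simps abs_le_iff)
qed

lemma eq_if_dyadic_bracket:
  fixes p q x :: real
  assumes "\<And>n. \<bar>q - x * p\<bar> \<le> p / 2^n"
  shows "q = x * p"
proof (rule ccontr)
  assume "q \<noteq> x * p"
  then obtain n where "p / \<bar>q - x * p\<bar> < 2^n"
    using real_arch_pow[of 2] by fastforce
  then have "p / 2^n < \<bar>q - x * p\<bar>"
    using \<open>q \<noteq> x * p\<close> by (simp add: field_simps)
  then show False
    using assms[of n] by simp
qed

lemma nonatomic_uniform_on:
  assumes "nonatomic M" and "C \<in> events"
  obtains V where "uniform_on M C V"
proof -
  obtain E where E: "dyadic_family C E"
    using nonatomic_dyadic_family[OF assms] .
  then obtain V where V: "V \<in> borel_measurable M" "\<And>\<omega>. 0 \<le> V \<omega> \<and> V \<omega> \<le> 1"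
    and "\<And>\<omega> n k. \<omega> \<in> E n k \<Longrightarrow> V \<omega> \<le> real k / 2^n"
    and "\<And>\<omega> n k. \<omega> \<in> C \<Longrightarrow> V \<omega> < real k / 2^n \<Longrightarrow> \<omega> \<in> E n k"
    using dyadic_family_rank[OF E] by blast
  then have "prob (C \<inter> {\<omega>\<in>space M. V \<omega> \<le> x}) = x * prob C" if "0 \<le> x" "x \<le> 1" for x
    using that by (intro eq_if_dyadic_bracket dyadic_family_bracket[OF E]) auto
  with assms V show ?thesis
    by (intro that[of V]) (simp add: uniform_on_def)
qed

end

section \<open>Rearrangements\<close>

definition uniform_01 :: "real measure" where
  "uniform_01 = distr (restrict_space lborel {0<..<1::real}) borel (\<lambda>u. u)"

lemma measurable_ident_restrict_01: "(\<lambda>u. u) \<in> borel_measurable (restrict_space lborel {0<..<1::real})"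
  by (rule measurable_restrict_space1) simp

lemma real_distribution_uniform_01: "real_distribution uniform_01"
proof -
  interpret prob_space "restrict_space lborel {0<..<1::real}"
    by (auto simp: emeasure_restrict_space space_restrict_space intro!: prob_spaceI)
  show ?thesis
    unfolding uniform_01_def real_distribution_def real_distribution_axioms_def
    by (auto intro!: prob_space_distr measurable_ident_restrict_01)
qed

lemma cdf_uniform_01: "cdf uniform_01 x = max 0 (min 1 x)"
proof -
  have "cdf uniform_01 x = measure (restrict_space lborel {0<..<1::real}) ({..x} \<inter> {0<..<1})"
    unfolding cdf_def uniform_01_def
    by (subst measure_distr[OF measurable_ident_restrict_01]) (auto simp: space_restrict_space vimage_def Int_def)
  also have "\<dots> = measure lborel ({..x} \<inter> {0<..<1})"
    by (subst measure_restrict_space) auto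
  also have "\<dots> = max 0 (min 1 x)"
  proof (cases "x \<le> 0")
    case False
    then have "{..x} \<inter> {0<..<1} = (if x < 1 then {0<..x} else {0<..<1})"
      by auto
    then show ?thesis using False by simp
  next
    case True
    then have "{..x} \<inter> {0<..<1} = {}"
      by auto
    then show ?thesis using True by simp
  qed
  finally show ?thesis .
qed

lemma AE_uniform_01: "AE u in uniform_01. u \<in> {0<..<1}"
  unfolding uniform_01_def
  by (subst AE_distr_iff) (auto intro: measurable_ident_restrict_01 simp: space_restrict_space)

lemma AE_in_01_if_distr_uniform_01:
  assumes "U \<in> borel_measurable M" and "distr M borel U = uniform_01"
  shows "AE \<omega> in M. U \<omega> \<in> {0<..<1}"
proof -
  have "AE u in distr M borel U. u \<in> {0<..<1}"
    unfolding assms(2) by (rule AE_uniform_01)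
  then show ?thesis
    using assms(1) by (subst (asm) AE_distr_iff) auto
qed

lemma real_distribution_quantile:
  assumes "real_distribution \<mu>"
  obtains Q where "Q \<in> borel_measurable borel" "mono_on {0<..<1} Q" "distr uniform_01 borel Q = \<mu>"
proof -
  interpret cdf_distribution \<mu>
    using assms by (simp add: cdf_distribution_def)
  define Q where "Q u = (if u \<in> {0<..<1::real} then Inf {x. u \<le> cdf \<mu> x} else 0)" for u
  have "Q \<in> borel_measurable borel"
    unfolding Q_def using measurable_CI by (subst measurable_restrict_space_iff[symmetric]) auto
  moreover have "mono_on {0<..<1} Q"
    using mono_I unfolding mono_on_def Q_def by auto
  moreover have "distr uniform_01 borel Q = \<mu>"
  proof -
    have "distr uniform_01 borel Q = distr (restrict_space lborel {0<..<1::real}) borel Q"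
      unfolding uniform_01_def
      by (subst distr_distr) (auto intro: \<open>Q \<in> borel_measurable borel\<close> measurable_ident_restrict_01 simp: comp_def)
    also have "\<dots> = distr (restrict_space lborel {0<..<1::real}) borel (\<lambda>u. Inf {x. u \<le> cdf \<mu> x})"
      by (rule distr_cong) (auto simp: Q_def space_restrict_space)
    also have "\<dots> = \<mu>"
      by (rule distr_I_eq_M)
    finally show ?thesis .
  qed
  ultimately show ?thesis
    using that by blast
qed

lemma quantile_gap:
  fixes Z :: "'a \<Rightarrow> real"
  assumes Q: "Q \<in> borel_measurable borel" "mono_on {0<..<1} Q"
    and law: "distr uniform_01 borel Q = distr M borel Z" and Z: "Z \<in> borel_measurable M"
    and nonconst: "\<not> (\<exists>c. AE \<omega> in M. Z \<omega> = c)"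
  obtains d where "0 < d" "d < 1/2" "Q d < Q (1 - d)"
proof -
  have "\<exists>d. 0 < d \<and> d < 1/2 \<and> Q d < Q (1 - d)"
  proof (rule ccontr)
    assume "\<nexists>d. 0 < d \<and> d < 1/2 \<and> Q d < Q (1 - d)"
    then have flat: "Q (1 - d) \<le> Q d" if "0 < d" "d < 1/2" for d
      using that by (meson not_less)
    have const: "Q u = Q (1/2)" if "0 < u" "u < 1" for u
    proof (cases "u < 1/2")
      case True
      then have "Q u \<le> Q (1/2)" "Q (1/2) \<le> Q (1 - u)"
        using that by (auto intro!: mono_onD[OF Q(2)])
      then show ?thesis
        using flat[of u] True that by linarith
    next
      case False
      show ?thesis
      proof (cases "u = 1/2")
        case False
        with \<open>\<not> u < 1/2\<close> have "Q (1 - u) \<le> Q (1/2)" "Q (1/2) \<le> Q u"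
          using that by (auto intro!: mono_onD[OF Q(2)])
        moreover have "Q u \<le> Q (1 - u)"
          using flat[of "1 - u"] False \<open>\<not> u < 1/2\<close> that by simp
        ultimately show ?thesis
          by linarith
      qed (rule arg_cong)
    qed
    have "AE u in uniform_01. Q u = Q (1/2)"
      using AE_uniform_01 by eventually_elim (rule const; simp)
    moreover have "Q \<in> borel_measurable uniform_01"
      using Q(1) by (subst measurable_cong_sets[of uniform_01 borel borel borel]) (simp_all add: uniform_01_def)
    ultimately have "AE x in distr uniform_01 borel Q. x = Q (1/2)"
      by (simp add: AE_distr_iff)
    then have "AE x in distr M borel Z. x = Q (1/2)"
      by (simp only: law)
    then show False
      using nonconst AE_distr_iff[OF Z, of "\<lambda>x. x = Q (1/2)"] by auto
  qed
  then show ?thesis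
    using that by blast
qed

context prob_space
begin

lemma prob_positive_part_pos:
  fixes Y :: "'a \<Rightarrow> real"
  assumes Y: "integrable M Y" "expectation Y = 0" and nonzero: "\<not> (AE \<omega> in M. Y \<omega> = 0)"
  shows "0 < prob {\<omega>\<in>space M. 0 < Y \<omega>}"
proof (rule ccontr)
  assume "\<not> ?thesis"
  then have "{\<omega>\<in>space M. 0 < Y \<omega>} \<in> null_sets M"
    using Y(1) by (auto simp: null_sets_def emeasure_eq_measure not_less intro: antisym)
  then have "AE \<omega> in M. 0 \<le> - Y \<omega>"
    by (auto elim!: AE_I' simp: not_less)
  then have "AE \<omega> in M. - Y \<omega> = 0"
    using integral_nonneg_eq_0_iff_AE[of M "\<lambda>\<omega>. - Y \<omega>"] Y by auto
  then show False
    using nonzero by auto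
qed

lemma prob_uniform_on_affine:
  assumes "uniform_on M C V" and C: "prob C = l" "0 < l"
  shows "prob (C \<inter> {\<omega>\<in>space M. a + l * V \<omega> \<le> x}) = max 0 (min l (x - a))"
proof -
  have V: "C \<in> events" "\<forall>\<omega>\<in>space M. 0 \<le> V \<omega> \<and> V \<omega> \<le> 1"
    "\<forall>y\<in>{0..1}. prob (C \<inter> {\<omega>\<in>space M. V \<omega> \<le> y}) = y * prob C"
    using assms(1) by (auto simp: uniform_on_def)
  have eq: "{\<omega>\<in>space M. a + l * V \<omega> \<le> x} = {\<omega>\<in>space M. V \<omega> \<le> (x - a) / l}"
    using C by (auto simp: field_simps)
  consider "(x - a) / l < 0" | "(x - a) / l \<in> {0..1}" | "1 < (x - a) / l"
    by fastforce
  then show ?thesis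
  proof cases
    case 1
    have "\<not> V \<omega> \<le> (x - a) / l" if "\<omega> \<in> space M" for \<omega>
      using V that 1 by (meson le_less_trans not_le)
    then have "C \<inter> {\<omega>\<in>space M. V \<omega> \<le> (x - a) / l} = {}"
      by blast
    moreover have "x - a < 0"
      using 1 C by (simp add: divide_less_0_iff)
    ultimately show ?thesis
      by (simp add: eq)
  next
    case 2
    then have "prob (C \<inter> {\<omega>\<in>space M. V \<omega> \<le> (x - a) / l}) = x - a"
      using V(3) C by simp
    moreover have "0 \<le> x - a" "x - a \<le> l"
      using 2 C by (simp_all add: divide_le_eq le_divide_eq)
    ultimately show ?thesis
      by (simp add: eq)
  next
    case 3
    have "V \<omega> \<le> (x - a) / l" if "\<omega> \<in> space M" for \<omega>
      using V that 3 by (meson less_imp_le order_trans)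
    then have "C \<inter> {\<omega>\<in>space M. V \<omega> \<le> (x - a) / l} = C \<inter> space M"
      by blast
    moreover have "l < x - a"
      using 3 C by (simp add: less_divide_eq)
    ultimately show ?thesis
      using C V(1) by (simp add: eq Int_absorb2)
  qed
qed

lemma distr_glued_uniform:
  assumes "A \<inter> B = {}" and "prob A = d" "prob B = d" and d: "0 < d" "d < 1/2"
    and VA: "uniform_on M A VA" and VB: "uniform_on M B VB"
    and VR: "uniform_on M (space M - (A \<union> B)) VR"
  shows "distr M borel (\<lambda>\<omega>. if \<omega> \<in> A then d * VA \<omega> else if \<omega> \<in> B then 1 - d + d * VB \<omega>
      else d + (1 - 2 * d) * VR \<omega>) = uniform_01" (is "distr M borel ?U = _")
proof -
  let ?R = "space M - (A \<union> B)"
  have events: "A \<in> events" "B \<in> events" "?R \<in> events"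
    and [measurable]: "VA \<in> borel_measurable M" "VB \<in> borel_measurable M" "VR \<in> borel_measurable M"
    using VA VB VR by (auto simp: uniform_on_def)
  have "prob (A \<union> B) = 2 * d"
    using assms events by (subst finite_measure_Union) auto
  then have "prob ?R = 1 - 2 * d"
    using events by (simp add: prob_compl)
  have U: "?U \<in> borel_measurable M"
    using events by measurable
  have "cdf (distr M borel ?U) x = max 0 (min 1 x)" for x
  proof -
    have "cdf (distr M borel ?U) x = prob {\<omega>\<in>space M. ?U \<omega> \<le> x}"
      unfolding cdf_def by (simp add: measure_distr[OF U] vimage_def Int_def conj_commute)
    also have "{\<omega>\<in>space M. ?U \<omega> \<le> x} =
        A \<inter> {\<omega>\<in>space M. 0 + d * VA \<omega> \<le> x} \<union> (B \<inter> {\<omega>\<in>space M. (1 - d) + d * VB \<omega> \<le> x}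
         \<union> ?R \<inter> {\<omega>\<in>space M. d + (1 - 2 * d) * VR \<omega> \<le> x})"
      using assms events sets.sets_into_space by auto
    also have "prob \<dots> = prob (A \<inter> {\<omega>\<in>space M. 0 + d * VA \<omega> \<le> x})
        + (prob (B \<inter> {\<omega>\<in>space M. (1 - d) + d * VB \<omega> \<le> x})
          + prob (?R \<inter> {\<omega>\<in>space M. d + (1 - 2 * d) * VR \<omega> \<le> x}))"
      using assms events
      by (subst finite_measure_Union, measurable, blast, subst finite_measure_Union, measurable, blast, simp)
    also have "\<dots> = max 0 (min d x) + (max 0 (min d (x - (1 - d))) + max 0 (min (1 - 2 * d) (x - d)))"
      using prob_uniform_on_affine[OF VA \<open>prob A = d\<close> \<open>0 < d\<close>, of 0 x]
        prob_uniform_on_affine[OF VB \<open>prob B = d\<close> \<open>0 < d\<close>, of "1 - d" x]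
        prob_uniform_on_affine[OF VR \<open>prob ?R = 1 - 2 * d\<close>, of d x] d
      by simp
    also have "\<dots> = max 0 (min 1 x)"
      using d by (auto simp: max_def min_def)
    finally show ?thesis .
  qed
  then show ?thesis
    using U real_distribution_uniform_01
    by (intro cdf_unique) (auto simp: cdf_uniform_01 intro!: real_distribution_distr)
qed

lemma nonatomic_swapped_uniforms:
  assumes "nonatomic M" and A: "A \<in> events" and B: "B \<in> events" "A \<inter> B = {}"
    and "prob A = d" "prob B = d" "0 < d" "d < 1/2"
  obtains U\<^sub>1 U\<^sub>2 where "U\<^sub>1 \<in> borel_measurable M" "U\<^sub>2 \<in> borel_measurable M"
    and "distr M borel U\<^sub>1 = uniform_01" "distr M borel U\<^sub>2 = uniform_01"
    and "\<And>\<omega>. \<omega> \<in> A \<Longrightarrow> U\<^sub>1 \<omega> \<le> d \<and> 1 - d \<le> U\<^sub>2 \<omega>"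
    and "\<And>\<omega>. \<omega> \<in> B \<Longrightarrow> 1 - d \<le> U\<^sub>1 \<omega> \<and> U\<^sub>2 \<omega> \<le> d"
    and "\<And>\<omega>. \<omega> \<notin> A \<union> B \<Longrightarrow> U\<^sub>1 \<omega> = U\<^sub>2 \<omega>"
proof -
  let ?R = "space M - (A \<union> B)"
  obtain VA VB VR where V: "uniform_on M A VA" "uniform_on M B VB" "uniform_on M ?R VR"
    using nonatomic_uniform_on[OF \<open>nonatomic M\<close>] A B by (metis sets.Diff sets.Un sets.top)
  have range: "0 \<le> d * VA \<omega> \<and> d * VA \<omega> \<le> d" "0 \<le> d * VB \<omega> \<and> d * VB \<omega> \<le> d"
    if "\<omega> \<in> space M" for \<omega>
    using that V \<open>0 < d\<close> by (auto simp: uniform_on_def mult_le_cancel_left1)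
  have "A \<subseteq> space M" "B \<subseteq> space M"
    using A B by (simp_all add: sets.sets_into_space)
  define U\<^sub>1 where "U\<^sub>1 \<omega> = (if \<omega> \<in> A then d * VA \<omega> else if \<omega> \<in> B then 1 - d + d * VB \<omega>
    else d + (1 - 2 * d) * VR \<omega>)" for \<omega>
  define U\<^sub>2 where "U\<^sub>2 \<omega> = (if \<omega> \<in> B then d * VB \<omega> else if \<omega> \<in> A then 1 - d + d * VA \<omega>
    else d + (1 - 2 * d) * VR \<omega>)" for \<omega>
  show ?thesis
  proof
    show "distr M borel U\<^sub>1 = uniform_01"
      unfolding U\<^sub>1_def using assms V by (intro distr_glued_uniform) auto
    show "distr M borel U\<^sub>2 = uniform_01"
      unfolding U\<^sub>2_def using assms V by (intro distr_glued_uniform) (auto simp: Un_commute)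
    show "U\<^sub>1 \<in> borel_measurable M" "U\<^sub>2 \<in> borel_measurable M"
      unfolding U\<^sub>1_def U\<^sub>2_def using A B V by (auto simp: uniform_on_def)
    show "U\<^sub>1 \<omega> \<le> d \<and> 1 - d \<le> U\<^sub>2 \<omega>" if "\<omega> \<in> A" for \<omega>
      using that range[of \<omega>] \<open>A \<inter> B = {}\<close> \<open>A \<subseteq> space M\<close> by (auto simp: U\<^sub>1_def U\<^sub>2_def)
    show "1 - d \<le> U\<^sub>1 \<omega> \<and> U\<^sub>2 \<omega> \<le> d" if "\<omega> \<in> B" for \<omega>
      using that range[of \<omega>] \<open>A \<inter> B = {}\<close> \<open>B \<subseteq> space M\<close> by (auto simp: U\<^sub>1_def U\<^sub>2_def)
    show "U\<^sub>1 \<omega> = U\<^sub>2 \<omega>" if "\<omega> \<notin> A \<union> B" for \<omega>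
      using that by (simp add: U\<^sub>1_def U\<^sub>2_def)
  qed
qed

lemma nonatomic_sign_events:
  fixes Y :: "'a \<Rightarrow> real"
  assumes "nonatomic M" and Y: "integrable M Y" "expectation Y = 0" "\<not> (AE \<omega> in M. Y \<omega> = 0)"
    and "0 < d\<^sub>0" "d\<^sub>0 < 1/2"
  obtains d A B where "0 < d" "d \<le> d\<^sub>0" "A \<in> events" "B \<in> events" "prob A = d" "prob B = d"
    and "A \<subseteq> {\<omega>\<in>space M. 0 < Y \<omega>}" "B \<subseteq> {\<omega>\<in>space M. Y \<omega> < 0}"
proof -
  let ?P = "{\<omega>\<in>space M. 0 < Y \<omega>}" and ?N = "{\<omega>\<in>space M. Y \<omega> < 0}"
  have "Y \<in> borel_measurable M"
    using Y(1) by (rule borel_measurable_integrable)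
  then have "?P \<in> events" "?N \<in> events"
    by measurable
  have "0 < prob ?P" "0 < prob ?N"
    using prob_positive_part_pos[OF Y] prob_positive_part_pos[of "\<lambda>\<omega>. - Y \<omega>"] Y by auto
  define d where "d = min d\<^sub>0 (min (prob ?P) (prob ?N))"
  have "0 < d" "d \<le> d\<^sub>0" "d \<le> prob ?P" "d \<le> prob ?N"
    using \<open>0 < d\<^sub>0\<close> \<open>0 < prob ?P\<close> \<open>0 < prob ?N\<close> unfolding d_def by auto
  moreover obtain A where "A \<in> events" "A \<subseteq> ?P" "prob A = d"
    using nonatomic_event_with_prob[OF \<open>nonatomic M\<close> \<open>?P \<in> events\<close>, of d] calculation by auto
  moreover obtain B where "B \<in> events" "B \<subseteq> ?N" "prob B = d"
    using nonatomic_event_with_prob[OF \<open>nonatomic M\<close> \<open>?N \<in> events\<close>, of d] calculation by auto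
  ultimately show ?thesis
    using that by blast
qed

text \<open>Composing the quantile function with two uniform variables that swap the bottom and top
  \<open>d\<close>-quantiles between \<open>A\<close> and \<open>B\<close>.\<close>

lemma nonatomic_swapped_rearrangements:
  fixes Q :: "real \<Rightarrow> real"
  assumes "nonatomic M" and Q: "Q \<in> borel_measurable borel" "mono_on {0<..<1} Q"
    and A: "A \<in> events" and B: "B \<in> events" "A \<inter> B = {}"
    and d: "prob A = d" "prob B = d" "0 < d" "d < 1/2" and gap: "Q d < Q (1 - d)"
  obtains Z\<^sub>1 Z\<^sub>2 where "Z\<^sub>1 \<in> borel_measurable M" "Z\<^sub>2 \<in> borel_measurable M"
    and "distr M borel Z\<^sub>1 = distr uniform_01 borel Q" "distr M borel Z\<^sub>2 = distr uniform_01 borel Q"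
    and "AE \<omega> in M. (\<omega> \<in> A \<longrightarrow> Z\<^sub>1 \<omega> < Z\<^sub>2 \<omega>) \<and> (\<omega> \<in> B \<longrightarrow> Z\<^sub>2 \<omega> < Z\<^sub>1 \<omega>) \<and>
      (\<omega> \<notin> A \<union> B \<longrightarrow> Z\<^sub>1 \<omega> = Z\<^sub>2 \<omega>)"
proof -
  obtain U\<^sub>1 U\<^sub>2 where U: "U\<^sub>1 \<in> borel_measurable M" "U\<^sub>2 \<in> borel_measurable M"
    and U_law: "distr M borel U\<^sub>1 = uniform_01" "distr M borel U\<^sub>2 = uniform_01"
    and on_A: "\<And>\<omega>. \<omega> \<in> A \<Longrightarrow> U\<^sub>1 \<omega> \<le> d \<and> 1 - d \<le> U\<^sub>2 \<omega>"
    and on_B: "\<And>\<omega>. \<omega> \<in> B \<Longrightarrow> 1 - d \<le> U\<^sub>1 \<omega> \<and> U\<^sub>2 \<omega> \<le> d"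
    and elsewhere: "\<And>\<omega>. \<omega> \<notin> A \<union> B \<Longrightarrow> U\<^sub>1 \<omega> = U\<^sub>2 \<omega>"
    using nonatomic_swapped_uniforms[OF \<open>nonatomic M\<close> A B d] by blast
  have low: "Q u < Q v" if "u \<in> {0<..<1}" "v \<in> {0<..<1}" "u \<le> d" "1 - d \<le> v" for u v
  proof -
    have "Q u \<le> Q d" "Q (1 - d) \<le> Q v"
      using that d by (auto intro!: mono_onD[OF Q(2)])
    then show ?thesis
      using gap by linarith
  qed
  have "AE \<omega> in M. U\<^sub>1 \<omega> \<in> {0<..<1}" "AE \<omega> in M. U\<^sub>2 \<omega> \<in> {0<..<1}"
    by (intro AE_in_01_if_distr_uniform_01 U U_law)+
  then have "AE \<omega> in M. (\<omega> \<in> A \<longrightarrow> Q (U\<^sub>1 \<omega>) < Q (U\<^sub>2 \<omega>)) \<and> (\<omega> \<in> B \<longrightarrow> Q (U\<^sub>2 \<omega>) < Q (U\<^sub>1 \<omega>)) \<and>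
      (\<omega> \<notin> A \<union> B \<longrightarrow> Q (U\<^sub>1 \<omega>) = Q (U\<^sub>2 \<omega>))"
    by eventually_elim (use low on_A on_B elsewhere in auto)
  moreover have "distr M borel (\<lambda>\<omega>. Q (U\<^sub>i \<omega>)) = distr uniform_01 borel Q"
    if "U\<^sub>i \<in> borel_measurable M" "distr M borel U\<^sub>i = uniform_01" for U\<^sub>i
    using distr_distr[OF Q(1) that(1)] that(2) by (simp add: comp_def)
  ultimately show ?thesis
    using that[of "\<lambda>\<omega>. Q (U\<^sub>1 \<omega>)" "\<lambda>\<omega>. Q (U\<^sub>2 \<omega>)"] U U_law Q(1) by auto
qed

text \<open>Two rearrangements of \<open>Z\<close> that put its low and high quantiles on opposite sign events of
  \<open>Y\<close> are separated by the pairing with \<open>Y\<close>.\<close>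

lemma rearrangements_separate:
  fixes Z Y :: "'a \<Rightarrow> real"
  assumes "nonatomic M" and Z: "Z \<in> borel_measurable M" and nonconst: "\<not> (\<exists>c. AE \<omega> in M. Z \<omega> = c)"
    and Y: "integrable M Y" "expectation Y = 0" "\<not> (AE \<omega> in M. Y \<omega> = 0)"
  obtains Z\<^sub>1 Z\<^sub>2 where "Z\<^sub>1 \<in> borel_measurable M" "Z\<^sub>2 \<in> borel_measurable M"
    and "distr M borel Z\<^sub>1 = distr M borel Z" "distr M borel Z\<^sub>2 = distr M borel Z"
    and "integrable M (\<lambda>\<omega>. Z\<^sub>1 \<omega> * Y \<omega>) \<Longrightarrow> integrable M (\<lambda>\<omega>. Z\<^sub>2 \<omega> * Y \<omega>) \<Longrightarrow>
      (\<integral>\<omega>. Z\<^sub>1 \<omega> * Y \<omega> \<partial>M) < (\<integral>\<omega>. Z\<^sub>2 \<omega> * Y \<omega> \<partial>M)"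
proof -
  obtain Q where Q: "Q \<in> borel_measurable borel" "mono_on {0<..<1} Q"
    and Q_law: "distr uniform_01 borel Q = distr M borel Z"
    by (rule real_distribution_quantile[OF real_distribution_distr[OF Z]])
  obtain d\<^sub>0 where d\<^sub>0: "0 < d\<^sub>0" "d\<^sub>0 < 1/2" "Q d\<^sub>0 < Q (1 - d\<^sub>0)"
    using quantile_gap[OF Q Q_law Z nonconst] .
  obtain d A B where d: "0 < d" "d \<le> d\<^sub>0" and AB: "A \<in> events" "B \<in> events" "prob A = d" "prob B = d"
    and signs: "A \<subseteq> {\<omega>\<in>space M. 0 < Y \<omega>}" "B \<subseteq> {\<omega>\<in>space M. Y \<omega> < 0}"
    using nonatomic_sign_events[OF \<open>nonatomic M\<close> Y d\<^sub>0(1,2)] by blast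
  have "Q d \<le> Q d\<^sub>0" "Q (1 - d\<^sub>0) \<le> Q (1 - d)"
    using d d\<^sub>0 by (auto intro!: mono_onD[OF Q(2)])
  then have "Q d < Q (1 - d)"
    using d\<^sub>0(3) by linarith
  moreover have "A \<inter> B = {}"
    using signs by force
  ultimately obtain Z\<^sub>1 Z\<^sub>2 where Z\<^sub>i: "Z\<^sub>1 \<in> borel_measurable M" "Z\<^sub>2 \<in> borel_measurable M"
    and law: "distr M borel Z\<^sub>1 = distr uniform_01 borel Q" "distr M borel Z\<^sub>2 = distr uniform_01 borel Q"
    and order: "AE \<omega> in M. (\<omega> \<in> A \<longrightarrow> Z\<^sub>1 \<omega> < Z\<^sub>2 \<omega>) \<and> (\<omega> \<in> B \<longrightarrow> Z\<^sub>2 \<omega> < Z\<^sub>1 \<omega>) \<and>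
      (\<omega> \<notin> A \<union> B \<longrightarrow> Z\<^sub>1 \<omega> = Z\<^sub>2 \<omega>)"
    using nonatomic_swapped_rearrangements[OF \<open>nonatomic M\<close> Q AB(1,2) _ AB(3,4) d(1)] d d\<^sub>0 by auto
  have "AE \<omega> in M. Z\<^sub>1 \<omega> * Y \<omega> \<le> Z\<^sub>2 \<omega> * Y \<omega> \<and> (\<omega> \<in> A \<longrightarrow> Z\<^sub>1 \<omega> * Y \<omega> \<noteq> Z\<^sub>2 \<omega> * Y \<omega>)"
    using order
  proof eventually_elim
    case (elim \<omega>)
    then show ?case
      using signs \<open>A \<inter> B = {}\<close>
      by (cases "\<omega> \<in> A"; cases "\<omega> \<in> B") (auto simp: mult_strict_right_mono mult_strict_right_mono_neg)
  qed
  then have "(\<integral>\<omega>. Z\<^sub>1 \<omega> * Y \<omega> \<partial>M) < (\<integral>\<omega>. Z\<^sub>2 \<omega> * Y \<omega> \<partial>M)"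
    if "integrable M (\<lambda>\<omega>. Z\<^sub>1 \<omega> * Y \<omega>)" "integrable M (\<lambda>\<omega>. Z\<^sub>2 \<omega> * Y \<omega>)"
    using that AB d by (intro integral_less_AE[where A = A]) (auto simp: emeasure_eq_measure elim: AE_mp)
  then show ?thesis
    using that Z\<^sub>i law Q_law by simp
qed

end

section \<open>Linear spaces of random variables and the weak topology\<close>

lemma linear_subspace_rv_zero: "linear_subspace_rv S \<Longrightarrow> (\<lambda>_. 0) \<in> S"
  by (simp add: linear_subspace_rv_def)

lemma linear_subspace_rv_add: "linear_subspace_rv S \<Longrightarrow> X \<in> S \<Longrightarrow> Y \<in> S \<Longrightarrow> (\<lambda>\<omega>. X \<omega> + Y \<omega>) \<in> S"
  unfolding linear_subspace_rv_def by blast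

lemma linear_subspace_rv_scale: "linear_subspace_rv S \<Longrightarrow> X \<in> S \<Longrightarrow> (\<lambda>\<omega>. c * X \<omega>) \<in> S"
  unfolding linear_subspace_rv_def by blast

lemma linear_subspace_rv_lincomb:
  "linear_subspace_rv S \<Longrightarrow> X \<in> S \<Longrightarrow> Y \<in> S \<Longrightarrow> (\<lambda>\<omega>. a * X \<omega> + b * Y \<omega>) \<in> S"
  using linear_subspace_rv_add[of S "\<lambda>\<omega>. a * X \<omega>" "\<lambda>\<omega>. b * Y \<omega>"] linear_subspace_rv_scale by blast

lemma linear_subspace_rv_sum:
  assumes "linear_subspace_rv S" "finite F" "F \<subseteq> S"
  shows "(\<lambda>\<omega>. \<Sum>Y\<in>F. c Y * Y \<omega>) \<in> S"
  using assms(2,3)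
proof (induction F rule: finite_induct)
  case empty
  then show ?case using linear_subspace_rv_zero[OF assms(1)] by simp
next
  case (insert Y F)
  then show ?case
    using linear_subspace_rv_lincomb[OF assms(1), of Y "\<lambda>\<omega>. \<Sum>Y\<in>F. c Y * Y \<omega>" "c Y" 1] by simp
qed

lemma affine_alongD:
  assumes "affine_along f S" "U \<in> S" "V \<in> S"
  shows "f (\<lambda>\<omega>. a * U \<omega> + b * V \<omega>) - f (\<lambda>_. 0) = ereal a * (f U - f (\<lambda>_. 0)) + ereal b * (f V - f (\<lambda>_. 0))"
  using assms unfolding affine_along_def by blast

lemma affine_along_less_infinity: "affine_along f S \<Longrightarrow> Z \<in> S \<Longrightarrow> f Z < \<infinity>"
  unfolding affine_along_def by blast

lemma convex_on_rvD:
  "convex_on_rv XX f \<Longrightarrow> X \<in> XX \<Longrightarrow> Y \<in> XX \<Longrightarrow> 0 < t \<Longrightarrow> t < 1 \<Longrightarrow>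
    f (\<lambda>\<omega>. t * X \<omega> + (1 - t) * Y \<omega>) \<le> ereal t * f X + ereal (1 - t) * f Y"
  unfolding convex_on_rv_def by blast

lemma openin_weak_top:
  "openin (weak_top M XX XXs) U \<longleftrightarrow> U \<subseteq> XX \<and> (\<forall>X\<in>U. \<exists>F \<epsilon>. finite F \<and> F \<subseteq> XXs \<and> \<epsilon> > 0 \<and>
      {X'\<in>XX. \<forall>Y\<in>F. \<bar>(\<integral>\<omega>. X' \<omega> * Y \<omega> \<partial>M) - (\<integral>\<omega>. X \<omega> * Y \<omega> \<partial>M)\<bar> < \<epsilon>} \<subseteq> U)"
proof -
  let ?ball = "\<lambda>X F \<epsilon>. {X'\<in>XX. \<forall>Y\<in>F. \<bar>(\<integral>\<omega>. X' \<omega> * Y \<omega> \<partial>M) - (\<integral>\<omega>. X \<omega> * Y \<omega> \<partial>M)\<bar> < \<epsilon>}"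
  let ?open = "\<lambda>U. U \<subseteq> XX \<and> (\<forall>X\<in>U. \<exists>F \<epsilon>. finite F \<and> F \<subseteq> XXs \<and> \<epsilon> > 0 \<and> ?ball X F \<epsilon> \<subseteq> U)"
  have "istopology ?open"
    unfolding istopology_def
  proof (rule conjI; intro allI impI)
    fix S T
    assume S: "?open S" and T: "?open T"
    show "?open (S \<inter> T)"
    proof (intro conjI ballI)
      fix X
      assume "X \<in> S \<inter> T"
      then obtain F\<^sub>1 \<epsilon>\<^sub>1 F\<^sub>2 \<epsilon>\<^sub>2 where "finite F\<^sub>1" "F\<^sub>1 \<subseteq> XXs" "\<epsilon>\<^sub>1 > 0" "?ball X F\<^sub>1 \<epsilon>\<^sub>1 \<subseteq> S"
        and "finite F\<^sub>2" "F\<^sub>2 \<subseteq> XXs" "\<epsilon>\<^sub>2 > 0" "?ball X F\<^sub>2 \<epsilon>\<^sub>2 \<subseteq> T"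
        using S T by (meson IntD1 IntD2)
      then show "\<exists>F \<epsilon>. finite F \<and> F \<subseteq> XXs \<and> \<epsilon> > 0 \<and> ?ball X F \<epsilon> \<subseteq> S \<inter> T"
        by (intro exI[of _ "F\<^sub>1 \<union> F\<^sub>2"] exI[of _ "min \<epsilon>\<^sub>1 \<epsilon>\<^sub>2"]) fastforce
    qed (use S in blast)
  next
    fix K
    assume "\<forall>U\<in>K. ?open U"
    then show "?open (\<Union>K)"
      by (intro conjI ballI) (blast, meson UnionE Union_upper order_trans)
  qed
  then show ?thesis
    unfolding weak_top_def by (simp only: topology_inverse')
qed

lemma lsc_weak_top_le:
  assumes lsc: "lsc_wrt (weak_top M XX XXs) f" and "X \<in> XX"
    and approx: "\<And>F \<epsilon> \<eta>. finite F \<Longrightarrow> F \<subseteq> XXs \<Longrightarrow> \<epsilon> > 0 \<Longrightarrow> (\<eta>::real) > 0 \<Longrightarrow>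
       \<exists>X'\<in>XX. (\<forall>Y\<in>F. \<bar>(\<integral>\<omega>. X' \<omega> * Y \<omega> \<partial>M) - (\<integral>\<omega>. X \<omega> * Y \<omega> \<partial>M)\<bar> < \<epsilon>) \<and> f X' \<le> ereal (b + \<eta>)"
  shows "f X \<le> ereal b"
proof (rule ccontr)
  assume "\<not> f X \<le> ereal b"
  then obtain c where c: "b < c" "ereal c < f X"
    by (metis ereal_dense2 ereal_less(2) less_ereal.simps(1) not_le)
  have "openin (weak_top M XX XXs) XX"
    unfolding openin_weak_top by (intro conjI ballI exI[of _ "{}"] exI[of _ "1::real"]) auto
  then have "X \<in> topspace (weak_top M XX XXs)"
    using \<open>X \<in> XX\<close> openin_subset by blast
  then obtain U where U: "openin (weak_top M XX XXs) U" "X \<in> U" "\<forall>X'\<in>U. ereal c < f X'"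
    using lsc c(2) unfolding lsc_wrt_def by blast
  then obtain F \<epsilon> where "finite F" "F \<subseteq> XXs" "\<epsilon> > 0"
    "{X'\<in>XX. \<forall>Y\<in>F. \<bar>(\<integral>\<omega>. X' \<omega> * Y \<omega> \<partial>M) - (\<integral>\<omega>. X \<omega> * Y \<omega> \<partial>M)\<bar> < \<epsilon>} \<subseteq> U"
    unfolding openin_weak_top by blast
  with approx[of F \<epsilon> "c - b"] c(1) obtain X' where "X' \<in> U" "f X' \<le> ereal c"
    by auto
  then show False
    using U(3) by (simp add: not_less[symmetric])
qed

lemma functional_in_span_if_kernels:
  fixes A :: "('a \<Rightarrow> real) set" and f :: "'i \<Rightarrow> ('a \<Rightarrow> real) \<Rightarrow> real"
    and g :: "('a \<Rightarrow> real) \<Rightarrow> real"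
  assumes "finite I"
    and A: "\<And>u v a b. u \<in> A \<Longrightarrow> v \<in> A \<Longrightarrow> (\<lambda>\<omega>. a * u \<omega> + b * v \<omega>) \<in> A"
    and f: "\<And>i u v a b. i \<in> I \<Longrightarrow> u \<in> A \<Longrightarrow> v \<in> A \<Longrightarrow> f i (\<lambda>\<omega>. a * u \<omega> + b * v \<omega>) = a * f i u + b * f i v"
    and g: "\<And>u v a b. u \<in> A \<Longrightarrow> v \<in> A \<Longrightarrow> g (\<lambda>\<omega>. a * u \<omega> + b * v \<omega>) = a * g u + b * g v"
    and kernel: "\<And>v. v \<in> A \<Longrightarrow> \<forall>i\<in>I. f i v = 0 \<Longrightarrow> g v = 0"
  shows "\<exists>c. \<forall>v\<in>A. g v = (\<Sum>i\<in>I. c i * f i v)"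
  using \<open>finite I\<close> f g kernel
proof (induction I arbitrary: g rule: finite_induct)
  case empty
  then show ?case by auto
next
  case (insert i\<^sub>1 I)
  obtain \<alpha> where \<alpha>: "\<And>v. v \<in> A \<Longrightarrow> \<forall>i\<in>I. f i v = 0 \<Longrightarrow> g v - \<alpha> * f i\<^sub>1 v = 0"
  proof (cases "\<exists>v\<^sub>1\<in>A. (\<forall>i\<in>I. f i v\<^sub>1 = 0) \<and> f i\<^sub>1 v\<^sub>1 \<noteq> 0")
    case True
    then obtain v\<^sub>1 where v\<^sub>1: "v\<^sub>1 \<in> A" "\<forall>i\<in>I. f i v\<^sub>1 = 0" "f i\<^sub>1 v\<^sub>1 \<noteq> 0"
      by blast
    \<comment> \<open>Any \<open>v\<close> in the kernel over \<open>I\<close> is, modulo the full kernel, a multiple of \<open>v\<^sub>1\<close>.\<close>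
    have "g v - g v\<^sub>1 / f i\<^sub>1 v\<^sub>1 * f i\<^sub>1 v = 0" if v: "v \<in> A" "\<forall>i\<in>I. f i v = 0" for v
    proof -
      define \<beta> where "\<beta> = f i\<^sub>1 v / f i\<^sub>1 v\<^sub>1"
      let ?v = "\<lambda>\<omega>. 1 * v \<omega> + (- \<beta>) * v\<^sub>1 \<omega>"
      have "f i ?v = f i v - \<beta> * f i v\<^sub>1" if "i \<in> insert i\<^sub>1 I" for i
        using insert.prems(1)[OF that v(1) v\<^sub>1(1), of 1 "- \<beta>"] by simp
      then have "\<forall>i\<in>insert i\<^sub>1 I. f i ?v = 0"
        using v v\<^sub>1 by (simp add: \<beta>_def)
      then have "g ?v = 0"
        using insert.prems(3) A v(1) v\<^sub>1(1) by blast
      moreover have "g ?v = g v - \<beta> * g v\<^sub>1"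
        using insert.prems(2)[OF v(1) v\<^sub>1(1), of 1 "- \<beta>"] by simp
      ultimately show ?thesis
        using v\<^sub>1(3) by (simp add: \<beta>_def)
    qed
    then show ?thesis
      using that by blast
  next
    case False
    then show ?thesis
      using that[of 0] insert.prems(3) by auto
  qed
  then obtain c where c: "\<forall>v\<in>A. g v - \<alpha> * f i\<^sub>1 v = (\<Sum>i\<in>I. c i * f i v)"
    using insert.IH[of "\<lambda>v. g v - \<alpha> * f i\<^sub>1 v"] insert.prems(1,2) by (auto simp: algebra_simps)
  have "(\<Sum>i\<in>I. (c(i\<^sub>1 := \<alpha>)) i * f i v) = (\<Sum>i\<in>I. c i * f i v)" for v
    using insert.hyps(2) by (intro sum.cong) auto
  then have "\<forall>v\<in>A. g v = (\<Sum>i\<in>insert i\<^sub>1 I. (c(i\<^sub>1 := \<alpha>)) i * f i v)"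
    using c insert.hyps by (simp add: algebra_simps)
  then show ?case
    by blast
qed

lemma small_weight:
  fixes S c \<epsilon> \<eta> :: real
  assumes "0 \<le> S" "0 < \<epsilon>" "0 < \<eta>"
  obtains s where "0 < s" "s < 1" "s * S < \<epsilon>" "s * c < \<eta>"
proof -
  define s where "s = min (1/2) (min (\<epsilon> / (S + 1)) (\<eta> / (\<bar>c\<bar> + 1)))"
  have s: "0 < s" "s < 1" "s \<le> \<epsilon> / (S + 1)" "s \<le> \<eta> / (\<bar>c\<bar> + 1)"
    using assms by (auto simp: s_def)
  have "s * (S + 1) \<le> \<epsilon>" "s * (\<bar>c\<bar> + 1) \<le> \<eta>"
    using s(3,4) \<open>0 \<le> S\<close> pos_le_divide_eq[of "S + 1"] pos_le_divide_eq[of "\<bar>c\<bar> + 1"] by simp_all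
  then have "s * S + s \<le> \<epsilon>" "s * \<bar>c\<bar> + s \<le> \<eta>"
    by (simp_all add: algebra_simps)
  moreover have "s * c \<le> s * \<bar>c\<bar>"
    using s(1) by (intro mult_left_mono) auto
  ultimately have "s * S < \<epsilon>" "s * c < \<eta>"
    using s(1) by linarith+
  with s(1,2) show ?thesis
    by (rule that)
qed

section \<open>Lower semicontinuous law-invariant convex functionals\<close>

locale lsc_law_invariant_convex = prob_space M for M :: "'a measure" +
  fixes XX XXs :: "('a \<Rightarrow> real) set" and \<phi> :: "('a \<Rightarrow> real) \<Rightarrow> ereal"
  assumes nonatomic: "nonatomic M"
    and XX: "linear_subspace_rv XX" and XXs: "linear_subspace_rv XXs"
    and XX_law_invariant: "law_invariant_set M XX"
    and XX_integrable: "\<And>X. X \<in> XX \<Longrightarrow> integrable M X"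
    and XXs_integrable: "\<And>Y. Y \<in> XXs \<Longrightarrow> integrable M Y"
    and const_XX: "\<And>c. (\<lambda>_. c) \<in> XX" and one_XXs: "(\<lambda>_. 1) \<in> XXs"
    and product_integrable: "\<And>X Y. X \<in> XX \<Longrightarrow> Y \<in> XXs \<Longrightarrow> integrable M (\<lambda>\<omega>. X \<omega> * Y \<omega>)"
    and not_minf: "\<And>X. X \<in> XX \<Longrightarrow> \<phi> X \<noteq> -\<infinity>"
    and convex: "convex_on_rv XX \<phi>"
    and lsc: "lsc_wrt (weak_top M XX XXs) \<phi>"
    and law_invariant: "law_invariant_fun M XX \<phi>"
    and affine_const: "affine_along \<phi> (rv_span (\<lambda>_. 1))"
begin

definition pairing :: "('a \<Rightarrow> real) \<Rightarrow> ('a \<Rightarrow> real) \<Rightarrow> real" where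
  "pairing X Y = (\<integral>\<omega>. X \<omega> * Y \<omega> \<partial>M)"

lemma pairing_lincomb_left:
  assumes "X \<in> XX" "Z \<in> XX" "Y \<in> XXs"
  shows "pairing (\<lambda>\<omega>. a * X \<omega> + b * Z \<omega>) Y = a * pairing X Y + b * pairing Z Y"
proof -
  have "(\<lambda>\<omega>. (a * X \<omega> + b * Z \<omega>) * Y \<omega>) = (\<lambda>\<omega>. a * (X \<omega> * Y \<omega>) + b * (Z \<omega> * Y \<omega>))"
    by (auto simp: algebra_simps)
  then show ?thesis
    unfolding pairing_def using product_integrable assms by simp
qed

lemma pairing_lincomb_right:
  assumes "X \<in> XX" "Y \<in> XXs" "Y' \<in> XXs"
  shows "pairing X (\<lambda>\<omega>. a * Y \<omega> + b * Y' \<omega>) = a * pairing X Y + b * pairing X Y'"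
proof -
  have "(\<lambda>\<omega>. X \<omega> * (a * Y \<omega> + b * Y' \<omega>)) = (\<lambda>\<omega>. a * (X \<omega> * Y \<omega>) + b * (X \<omega> * Y' \<omega>))"
    by (auto simp: algebra_simps)
  then show ?thesis
    unfolding pairing_def using product_integrable assms by simp
qed

lemma pairing_sum_right:
  assumes "X \<in> XX" "finite F" "F \<subseteq> XXs"
  shows "pairing X (\<lambda>\<omega>. \<Sum>Y\<in>F. c Y * Y \<omega>) = (\<Sum>Y\<in>F. c Y * pairing X Y)"
  using assms(2,3)
proof (induction F rule: finite_induct)
  case (insert Y F)
  then show ?case
    using pairing_lincomb_right[OF assms(1), of Y "\<lambda>\<omega>. \<Sum>Y\<in>F. c Y * Y \<omega>" "c Y" 1]
      linear_subspace_rv_sum[OF XXs] by simp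
qed (simp add: pairing_def)

lemma pairing_one: "pairing X (\<lambda>_. 1) = expectation X"
  by (simp add: pairing_def)

definition \<phi>\<^sub>0 :: real where
  "\<phi>\<^sub>0 = real_of_ereal (\<phi> (\<lambda>_. 0))"

lemma \<phi>_zero: "\<phi> (\<lambda>_. 0) = ereal \<phi>\<^sub>0"
proof -
  have "(\<lambda>_. 0::real) \<in> rv_span (\<lambda>_. 1)"
    unfolding rv_span_def by (auto intro!: exI[of _ 0])
  then have "\<phi> (\<lambda>_. 0) < \<infinity>"
    by (rule affine_along_less_infinity[OF affine_const])
  moreover have "\<phi> (\<lambda>_. 0) \<noteq> -\<infinity>"
    using not_minf const_XX by blast
  ultimately show ?thesis
    unfolding \<phi>\<^sub>0_def by (cases "\<phi> (\<lambda>_. 0)") auto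
qed

definition affine_dir :: "('a \<Rightarrow> real) \<Rightarrow> real \<Rightarrow> bool" where
  "affine_dir d \<kappa> \<longleftrightarrow> d \<in> XX \<and> (\<forall>t. \<phi> (\<lambda>\<omega>. t * d \<omega>) = ereal (\<phi>\<^sub>0 + t * \<kappa>))"

lemma affine_along_span_imp_affine_dir:
  assumes "Z \<in> XX" and affine: "affine_along \<phi> (rv_span Z)"
  obtains \<kappa> where "affine_dir Z \<kappa>"
proof -
  have span: "(\<lambda>\<omega>. t * Z \<omega>) \<in> rv_span Z" for t
    unfolding rv_span_def by blast
  have finite: "\<exists>r. \<phi> (\<lambda>\<omega>. t * Z \<omega>) = ereal r" for t
  proof -
    have "\<phi> (\<lambda>\<omega>. t * Z \<omega>) < \<infinity>"
      using affine span by (rule affine_along_less_infinity)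
    moreover have "\<phi> (\<lambda>\<omega>. t * Z \<omega>) \<noteq> -\<infinity>"
      using not_minf linear_subspace_rv_scale[OF XX \<open>Z \<in> XX\<close>] by blast
    ultimately show ?thesis
      by (cases "\<phi> (\<lambda>\<omega>. t * Z \<omega>)") auto
  qed
  obtain z where z: "\<phi> (\<lambda>\<omega>. 1 * Z \<omega>) = ereal z"
    using finite by blast
  have "\<phi> (\<lambda>\<omega>. t * Z \<omega>) = ereal (\<phi>\<^sub>0 + t * (z - \<phi>\<^sub>0))" for t
  proof -
    obtain w where w: "\<phi> (\<lambda>\<omega>. t * Z \<omega>) = ereal w"
      using finite by blast
    have "\<phi> (\<lambda>\<omega>. t * (1 * Z \<omega>) + 0 * (1 * Z \<omega>)) - \<phi> (\<lambda>_. 0)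
        = ereal t * (\<phi> (\<lambda>\<omega>. 1 * Z \<omega>) - \<phi> (\<lambda>_. 0)) + ereal 0 * (\<phi> (\<lambda>\<omega>. 1 * Z \<omega>) - \<phi> (\<lambda>_. 0))"
      by (rule affine_alongD[OF affine span span])
    then have "w - \<phi>\<^sub>0 = t * (z - \<phi>\<^sub>0)"
      using w z by (simp add: \<phi>_zero)
    then show ?thesis
      using w by simp
  qed
  then show ?thesis
    using that \<open>Z \<in> XX\<close> unfolding affine_dir_def by blast
qed

definition const_slope :: real where
  "const_slope = real_of_ereal (\<phi> (\<lambda>_. 1)) - \<phi>\<^sub>0"

lemma affine_dir_one: "affine_dir (\<lambda>_. 1) const_slope"
proof -
  obtain \<kappa> where \<kappa>: "affine_dir (\<lambda>_. 1) \<kappa>"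
    using affine_along_span_imp_affine_dir[OF const_XX affine_const] .
  then have "\<phi> (\<lambda>_. 1) = ereal (\<phi>\<^sub>0 + \<kappa>)"
    unfolding affine_dir_def by (metis mult.right_neutral mult_1)
  then show ?thesis
    using \<kappa> by (simp add: const_slope_def)
qed

lemma affine_dir_translate_le:
  assumes dir: "affine_dir d \<kappa>" and y: "y \<in> XX" "\<phi> y = ereal r"
  shows "\<phi> (\<lambda>\<omega>. y \<omega> + t * d \<omega>) \<le> ereal (r + t * \<kappa>)"
proof (rule lsc_weak_top_le[OF lsc])
  have d: "d \<in> XX" "\<And>t. \<phi> (\<lambda>\<omega>. t * d \<omega>) = ereal (\<phi>\<^sub>0 + t * \<kappa>)"
    using dir unfolding affine_dir_def by auto
  let ?w = "\<lambda>\<omega>. y \<omega> + t * d \<omega>"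
  show "?w \<in> XX"
    using linear_subspace_rv_lincomb[OF XX y(1) d(1), of 1 t] by simp
  fix F and \<epsilon> \<eta> :: real
  assume F: "finite F" "F \<subseteq> XXs" and "0 < \<epsilon>" "0 < \<eta>"
  define S where "S = (\<Sum>Y\<in>F. \<bar>pairing y Y\<bar>)"
  have "0 \<le> S"
    unfolding S_def by (intro sum_nonneg) auto
  then obtain s where s: "0 < s" "s < 1" "s * S < \<epsilon>" "s * (\<phi>\<^sub>0 - r) < \<eta>"
    using small_weight \<open>0 < \<epsilon>\<close> \<open>0 < \<eta>\<close> by blast
  \<comment> \<open>The convex combination of \<open>y\<close> with the far point \<open>(t / s) d\<close> is \<open>?w - s y\<close>: weakly close
    to \<open>?w\<close>, with value controlled by convexity.\<close>
  define X' where "X' = (\<lambda>\<omega>. s * ((t / s) * d \<omega>) + (1 - s) * y \<omega>)"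
  have X'_eq: "X' = (\<lambda>\<omega>. 1 * ?w \<omega> + (- s) * y \<omega>)"
    unfolding X'_def using s by (auto simp: field_simps)
  have "X' \<in> XX"
    unfolding X'_def by (intro linear_subspace_rv_lincomb[OF XX] linear_subspace_rv_scale[OF XX] d y)
  moreover have "\<bar>(\<integral>\<omega>. X' \<omega> * Y \<omega> \<partial>M) - (\<integral>\<omega>. ?w \<omega> * Y \<omega> \<partial>M)\<bar> < \<epsilon>" if "Y \<in> F" for Y
  proof -
    have "pairing X' Y = pairing ?w Y - s * pairing y Y"
      unfolding X'_eq using pairing_lincomb_left[OF \<open>?w \<in> XX\<close> y(1), of Y 1 "- s"] that F by auto
    then have "\<bar>pairing X' Y - pairing ?w Y\<bar> = s * \<bar>pairing y Y\<bar>"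
      using s by (simp add: abs_mult)
    also have "\<dots> \<le> s * S"
      unfolding S_def using that F(1) s by (intro mult_left_mono member_le_sum) auto
    finally show ?thesis
      using s(3) unfolding pairing_def by simp
  qed
  moreover have "\<phi> X' \<le> ereal (r + t * \<kappa> + \<eta>)"
  proof -
    have "\<phi> X' \<le> ereal s * \<phi> (\<lambda>\<omega>. (t / s) * d \<omega>) + ereal (1 - s) * \<phi> y"
      unfolding X'_def using s by (intro convex_on_rvD[OF convex] linear_subspace_rv_scale[OF XX] d y) auto
    also have "\<dots> = ereal s * ereal (\<phi>\<^sub>0 + (t / s) * \<kappa>) + ereal (1 - s) * ereal r"
      by (simp only: d(2) y(2))
    also have "\<dots> = ereal (r + t * \<kappa> + s * (\<phi>\<^sub>0 - r))"
      using s by (simp add: field_simps)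
    also have "\<dots> \<le> ereal (r + t * \<kappa> + \<eta>)"
      using s(4) by simp
    finally show ?thesis .
  qed
  ultimately show "\<exists>X'\<in>XX. (\<forall>Y\<in>F. \<bar>(\<integral>\<omega>. X' \<omega> * Y \<omega> \<partial>M) - (\<integral>\<omega>. ?w \<omega> * Y \<omega> \<partial>M)\<bar> < \<epsilon>) \<and>
      \<phi> X' \<le> ereal (r + t * \<kappa> + \<eta>)"
    by blast
qed

lemma affine_dir_translate:
  assumes dir: "affine_dir d \<kappa>" and y: "y \<in> XX"
  shows "\<phi> (\<lambda>\<omega>. y \<omega> + t * d \<omega>) = \<phi> y + ereal (t * \<kappa>)"
proof -
  let ?w = "\<lambda>\<omega>. y \<omega> + t * d \<omega>"
  have "?w \<in> XX"
    using dir y linear_subspace_rv_lincomb[OF XX, of y d 1 t] by (simp add: affine_dir_def)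
  have shift_back: "(\<lambda>\<omega>. ?w \<omega> + (- t) * d \<omega>) = y"
    by auto
  show ?thesis
  proof (cases "\<phi> ?w")
    case (real r')
    then have "\<phi> y \<le> ereal (r' - t * \<kappa>)"
      using affine_dir_translate_le[OF dir \<open>?w \<in> XX\<close>, of r' "- t"] shift_back by simp
    moreover have "\<phi> y \<noteq> -\<infinity>"
      using not_minf y by blast
    ultimately obtain r where r: "\<phi> y = ereal r" "r \<le> r' - t * \<kappa>"
      by (cases "\<phi> y") auto
    then have "r' \<le> r + t * \<kappa>"
      using affine_dir_translate_le[OF dir y r(1), of t] real by simp
    then show ?thesis
      using r real by simp
  next
    case PInf
    have "\<phi> y = \<infinity>"
    proof (rule ccontr)
      assume "\<phi> y \<noteq> \<infinity>"
      then obtain r where "\<phi> y = ereal r"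
        using not_minf y by (cases "\<phi> y") auto
      then show False
        using affine_dir_translate_le[OF dir y, of r t] PInf by simp
    qed
    then show ?thesis
      using PInf by simp
  next
    case MInf
    then show ?thesis
      using not_minf \<open>?w \<in> XX\<close> by blast
  qed
qed

lemma affine_dir_law:
  assumes dir: "affine_dir d \<kappa>" and "d' \<in> XX" and law: "distr M borel d' = distr M borel d"
  shows "affine_dir d' \<kappa>"
  unfolding affine_dir_def
proof (intro conjI allI \<open>d' \<in> XX\<close>)
  fix t
  have "d \<in> XX"
    using dir by (simp add: affine_dir_def)
  then have measurable: "d \<in> borel_measurable M" "d' \<in> borel_measurable M"
    using XX_integrable \<open>d' \<in> XX\<close> by auto
  have "distr M borel (\<lambda>\<omega>. t * d' \<omega>) = distr (distr M borel d') borel (\<lambda>x. t * x)"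
    using measurable by (simp add: distr_distr comp_def)
  also have "\<dots> = distr M borel (\<lambda>\<omega>. t * d \<omega>)"
    using measurable by (simp add: law distr_distr comp_def)
  finally have "\<phi> (\<lambda>\<omega>. t * d' \<omega>) = \<phi> (\<lambda>\<omega>. t * d \<omega>)"
    using law_invariant linear_subspace_rv_scale[OF XX] \<open>d \<in> XX\<close> \<open>d' \<in> XX\<close>
    unfolding law_invariant_fun_def by blast
  then show "\<phi> (\<lambda>\<omega>. t * d' \<omega>) = ereal (\<phi>\<^sub>0 + t * \<kappa>)"
    using dir by (simp add: affine_dir_def)
qed

lemma affine_dir_lincomb:
  assumes d\<^sub>1: "affine_dir d\<^sub>1 \<kappa>\<^sub>1" and d\<^sub>2: "affine_dir d\<^sub>2 \<kappa>\<^sub>2"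
  shows "affine_dir (\<lambda>\<omega>. a * d\<^sub>1 \<omega> + b * d\<^sub>2 \<omega>) (a * \<kappa>\<^sub>1 + b * \<kappa>\<^sub>2)"
  unfolding affine_dir_def
proof (intro conjI allI)
  have "d\<^sub>1 \<in> XX" "d\<^sub>2 \<in> XX"
    using d\<^sub>1 d\<^sub>2 by (simp_all add: affine_dir_def)
  then show "(\<lambda>\<omega>. a * d\<^sub>1 \<omega> + b * d\<^sub>2 \<omega>) \<in> XX"
    by (rule linear_subspace_rv_lincomb[OF XX])
  fix t
  have "(\<lambda>\<omega>. t * (a * d\<^sub>1 \<omega> + b * d\<^sub>2 \<omega>)) = (\<lambda>\<omega>. (t * a) * d\<^sub>1 \<omega> + (t * b) * d\<^sub>2 \<omega>)"
    by (auto simp: algebra_simps)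
  then have "\<phi> (\<lambda>\<omega>. t * (a * d\<^sub>1 \<omega> + b * d\<^sub>2 \<omega>)) = \<phi> (\<lambda>\<omega>. (t * a) * d\<^sub>1 \<omega>) + ereal ((t * b) * \<kappa>\<^sub>2)"
    using affine_dir_translate[OF d\<^sub>2 linear_subspace_rv_scale[OF XX \<open>d\<^sub>1 \<in> XX\<close>]] by (simp only:)
  moreover have "\<phi> (\<lambda>\<omega>. (t * a) * d\<^sub>1 \<omega>) = ereal (\<phi>\<^sub>0 + (t * a) * \<kappa>\<^sub>1)"
    using d\<^sub>1 unfolding affine_dir_def by blast
  ultimately show "\<phi> (\<lambda>\<omega>. t * (a * d\<^sub>1 \<omega> + b * d\<^sub>2 \<omega>)) = ereal (\<phi>\<^sub>0 + t * (a * \<kappa>\<^sub>1 + b * \<kappa>\<^sub>2))"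
    by (simp add: algebra_simps)
qed

definition mean_affine_dirs :: "('a \<Rightarrow> real) set" where
  "mean_affine_dirs = {v. affine_dir v (const_slope * expectation v)}"

lemma mean_affine_dirs_subset: "v \<in> mean_affine_dirs \<Longrightarrow> v \<in> XX"
  by (simp add: mean_affine_dirs_def affine_dir_def)

lemma mean_affine_dirs_lincomb:
  assumes "v\<^sub>1 \<in> mean_affine_dirs" "v\<^sub>2 \<in> mean_affine_dirs"
  shows "(\<lambda>\<omega>. a * v\<^sub>1 \<omega> + b * v\<^sub>2 \<omega>) \<in> mean_affine_dirs"
proof -
  have "integrable M v\<^sub>1" "integrable M v\<^sub>2"
    using assms mean_affine_dirs_subset XX_integrable by auto
  then have slope: "const_slope * expectation (\<lambda>\<omega>. a * v\<^sub>1 \<omega> + b * v\<^sub>2 \<omega>)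
      = a * (const_slope * expectation v\<^sub>1) + b * (const_slope * expectation v\<^sub>2)"
    by (simp add: algebra_simps)
  show ?thesis
    unfolding mean_affine_dirs_def mem_Collect_eq slope
    using assms unfolding mean_affine_dirs_def by (intro affine_dir_lincomb) auto
qed

lemma one_in_mean_affine_dirs: "(\<lambda>_. 1) \<in> mean_affine_dirs"
  using affine_dir_one by (simp add: mean_affine_dirs_def prob_space)

lemma \<phi>_mean_affine_dirs: "v \<in> mean_affine_dirs \<Longrightarrow> \<phi> v = ereal (\<phi>\<^sub>0 + const_slope * expectation v)"
  unfolding mean_affine_dirs_def affine_dir_def by (auto dest: spec[of _ 1])

text \<open>Differences of rearrangements of \<open>Z\<close> have slope and mean zero, and suitable
  rearrangements are told apart by every nonzero \<open>Y\<close> of mean zero.\<close>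

lemma mean_affine_dirs_annihilator:
  assumes "Z \<in> XX" "nonconstant_rv M Z" "affine_dir Z \<kappa>"
    and "Y \<in> XXs" and annihilates: "\<forall>v\<in>mean_affine_dirs. pairing v Y = 0"
  shows "AE \<omega> in M. Y \<omega> = 0"
proof (rule ccontr)
  assume nonzero: "\<not> (AE \<omega> in M. Y \<omega> = 0)"
  have "pairing (\<lambda>_. 1) Y = 0"
    using annihilates one_in_mean_affine_dirs by blast
  then have "expectation Y = 0"
    by (simp add: pairing_def)
  moreover have "Z \<in> borel_measurable M"
    using XX_integrable \<open>Z \<in> XX\<close> by auto
  moreover have "\<not> (\<exists>c. AE \<omega> in M. Z \<omega> = c)"
    using \<open>nonconstant_rv M Z\<close> unfolding nonconstant_rv_def .
  ultimately obtain Z\<^sub>1 Z\<^sub>2 where Z\<^sub>i: "Z\<^sub>1 \<in> borel_measurable M" "Z\<^sub>2 \<in> borel_measurable M"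
    and law: "distr M borel Z\<^sub>1 = distr M borel Z" "distr M borel Z\<^sub>2 = distr M borel Z"
    and separate: "integrable M (\<lambda>\<omega>. Z\<^sub>1 \<omega> * Y \<omega>) \<Longrightarrow> integrable M (\<lambda>\<omega>. Z\<^sub>2 \<omega> * Y \<omega>) \<Longrightarrow>
      (\<integral>\<omega>. Z\<^sub>1 \<omega> * Y \<omega> \<partial>M) < (\<integral>\<omega>. Z\<^sub>2 \<omega> * Y \<omega> \<partial>M)"
    using rearrangements_separate[OF nonatomic _ _ XXs_integrable[OF \<open>Y \<in> XXs\<close>] _ nonzero] by blast
  have "Z\<^sub>1 \<in> XX" "Z\<^sub>2 \<in> XX"
    using XX_law_invariant Z\<^sub>i law \<open>Z \<in> XX\<close> unfolding law_invariant_set_def by blast+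
  have "expectation Z\<^sub>1 = (\<integral>x. x \<partial>distr M borel Z\<^sub>1)"
    using Z\<^sub>i(1) by (simp add: integral_distr)
  also have "\<dots> = (\<integral>x. x \<partial>distr M borel Z\<^sub>2)"
    using law by simp
  also have "\<dots> = expectation Z\<^sub>2"
    using Z\<^sub>i(2) by (simp add: integral_distr)
  finally have "expectation Z\<^sub>1 = expectation Z\<^sub>2" .
  then have "expectation (\<lambda>\<omega>. 1 * Z\<^sub>1 \<omega> + (- 1) * Z\<^sub>2 \<omega>) = 0"
    using XX_integrable \<open>Z\<^sub>1 \<in> XX\<close> \<open>Z\<^sub>2 \<in> XX\<close> by simp
  moreover have "affine_dir (\<lambda>\<omega>. 1 * Z\<^sub>1 \<omega> + (- 1) * Z\<^sub>2 \<omega>) 0"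
    using affine_dir_lincomb[OF affine_dir_law[OF \<open>affine_dir Z \<kappa>\<close> \<open>Z\<^sub>1 \<in> XX\<close> law(1)]
        affine_dir_law[OF \<open>affine_dir Z \<kappa>\<close> \<open>Z\<^sub>2 \<in> XX\<close> law(2)], of 1 "- 1"] by simp
  ultimately have "(\<lambda>\<omega>. 1 * Z\<^sub>1 \<omega> + (- 1) * Z\<^sub>2 \<omega>) \<in> mean_affine_dirs"
    by (simp add: mean_affine_dirs_def)
  then have "pairing Z\<^sub>1 Y = pairing Z\<^sub>2 Y"
    using annihilates pairing_lincomb_left[OF \<open>Z\<^sub>1 \<in> XX\<close> \<open>Z\<^sub>2 \<in> XX\<close> \<open>Y \<in> XXs\<close>, of 1 "- 1"] by simp
  then show False
    using separate product_integrable \<open>Z\<^sub>1 \<in> XX\<close> \<open>Z\<^sub>2 \<in> XX\<close> \<open>Y \<in> XXs\<close> by (simp add: pairing_def)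
qed

text \<open>On \<open>mean_affine_dirs\<close>, \<open>Y\<^sub>0\<close> is a combination of \<open>F\<close>; the remainder is separated away,
  so the combination persists on all of \<open>XX\<close>.\<close>

lemma pairing_kernel_extends:
  assumes separating: "\<And>Y. Y \<in> XXs \<Longrightarrow> \<forall>v\<in>mean_affine_dirs. pairing v Y = 0 \<Longrightarrow> AE \<omega> in M. Y \<omega> = 0"
    and "finite F" and F: "F \<subseteq> XXs" and "Y\<^sub>0 \<in> XXs"
    and kernel: "\<And>e. e \<in> mean_affine_dirs \<Longrightarrow> \<forall>Y\<in>F. pairing e Y = 0 \<Longrightarrow> pairing e Y\<^sub>0 = 0"
    and "W \<in> XX" "\<And>Y. Y \<in> F \<Longrightarrow> pairing W Y = 0"
  shows "pairing W Y\<^sub>0 = 0"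
proof -
  have "\<exists>c. \<forall>v\<in>mean_affine_dirs. pairing v Y\<^sub>0 = (\<Sum>Y\<in>F. c Y * pairing v Y)"
  proof (rule functional_in_span_if_kernels[where f = "\<lambda>Y v. pairing v Y" and g = "\<lambda>v. pairing v Y\<^sub>0"])
    fix u v :: "'a \<Rightarrow> real" and a b :: real
    assume "u \<in> mean_affine_dirs" "v \<in> mean_affine_dirs"
    then have "u \<in> XX" "v \<in> XX"
      by (simp_all add: mean_affine_dirs_subset)
    show "(\<lambda>\<omega>. a * u \<omega> + b * v \<omega>) \<in> mean_affine_dirs"
      using \<open>u \<in> mean_affine_dirs\<close> \<open>v \<in> mean_affine_dirs\<close> by (rule mean_affine_dirs_lincomb)
    show "pairing (\<lambda>\<omega>. a * u \<omega> + b * v \<omega>) Y\<^sub>0 = a * pairing u Y\<^sub>0 + b * pairing v Y\<^sub>0"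
      using \<open>u \<in> XX\<close> \<open>v \<in> XX\<close> \<open>Y\<^sub>0 \<in> XXs\<close> by (rule pairing_lincomb_left)
    show "pairing (\<lambda>\<omega>. a * u \<omega> + b * v \<omega>) Y = a * pairing u Y + b * pairing v Y" if "Y \<in> F" for Y
      using \<open>u \<in> XX\<close> \<open>v \<in> XX\<close> that F by (intro pairing_lincomb_left) auto
  qed (use \<open>finite F\<close> kernel in auto)
  then obtain c where c: "\<forall>v\<in>mean_affine_dirs. pairing v Y\<^sub>0 = (\<Sum>Y\<in>F. c Y * pairing v Y)"
    by blast
  define R where "R = (\<lambda>\<omega>. 1 * Y\<^sub>0 \<omega> + (- 1) * (\<Sum>Y\<in>F. c Y * Y \<omega>))"
  have "(\<lambda>\<omega>. \<Sum>Y\<in>F. c Y * Y \<omega>) \<in> XXs"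
    using linear_subspace_rv_sum[OF XXs \<open>finite F\<close> F] .
  then have "R \<in> XXs"
    unfolding R_def using linear_subspace_rv_lincomb[OF XXs \<open>Y\<^sub>0 \<in> XXs\<close>] by blast
  have pairing_R: "pairing V R = pairing V Y\<^sub>0 - (\<Sum>Y\<in>F. c Y * pairing V Y)" if "V \<in> XX" for V
    unfolding R_def using pairing_lincomb_right[OF that \<open>Y\<^sub>0 \<in> XXs\<close> \<open>(\<lambda>\<omega>. \<Sum>Y\<in>F. _) \<in> XXs\<close>, of 1 "- 1"]
      pairing_sum_right[OF that \<open>finite F\<close> F] by simp
  have "\<forall>v\<in>mean_affine_dirs. pairing v R = 0"
    using c pairing_R mean_affine_dirs_subset by simp
  then have "AE \<omega> in M. R \<omega> = 0"
    using separating \<open>R \<in> XXs\<close> by blast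
  then have "pairing W R = 0"
    unfolding pairing_def by (intro integral_eq_zero_AE) auto
  then show ?thesis
    using pairing_R[OF \<open>W \<in> XX\<close>] \<open>\<And>Y. Y \<in> F \<Longrightarrow> pairing W Y = 0\<close> by simp
qed

lemma mean_affine_dirs_weakly_dense:
  assumes separating: "\<And>Y. Y \<in> XXs \<Longrightarrow> \<forall>v\<in>mean_affine_dirs. pairing v Y = 0 \<Longrightarrow> AE \<omega> in M. Y \<omega> = 0"
    and "finite F" "F \<subseteq> XXs" and "X \<in> XX"
  shows "\<exists>v\<in>mean_affine_dirs. \<forall>Y\<in>F. pairing v Y = pairing X Y"
  using \<open>finite F\<close> \<open>F \<subseteq> XXs\<close>
proof (induction F rule: finite_induct)
  case empty
  then show ?case using one_in_mean_affine_dirs by blast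
next
  case (insert Y\<^sub>0 F)
  then have F: "F \<subseteq> XXs" and "Y\<^sub>0 \<in> XXs"
    by auto
  obtain v\<^sub>1 where v\<^sub>1: "v\<^sub>1 \<in> mean_affine_dirs" "\<forall>Y\<in>F. pairing v\<^sub>1 Y = pairing X Y"
    using insert.IH[OF F] by blast
  have "v\<^sub>1 \<in> XX"
    using v\<^sub>1(1) by (rule mean_affine_dirs_subset)
  define W where "W = (\<lambda>\<omega>. 1 * X \<omega> + (- 1) * v\<^sub>1 \<omega>)"
  have "W \<in> XX"
    unfolding W_def using linear_subspace_rv_lincomb[OF XX \<open>X \<in> XX\<close> \<open>v\<^sub>1 \<in> XX\<close>] .
  have pairing_W: "pairing W Y = pairing X Y - pairing v\<^sub>1 Y" if "Y \<in> XXs" for Y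
    unfolding W_def using pairing_lincomb_left[OF \<open>X \<in> XX\<close> \<open>v\<^sub>1 \<in> XX\<close> that, of 1 "- 1"] by simp
  show ?case
  proof (cases "\<exists>e\<in>mean_affine_dirs. (\<forall>Y\<in>F. pairing e Y = 0) \<and> pairing e Y\<^sub>0 \<noteq> 0")
    case True
    then obtain e where e: "e \<in> mean_affine_dirs" "\<forall>Y\<in>F. pairing e Y = 0" "pairing e Y\<^sub>0 \<noteq> 0"
      by blast
    have "e \<in> XX"
      using e(1) by (rule mean_affine_dirs_subset)
    define v where "v = (\<lambda>\<omega>. 1 * v\<^sub>1 \<omega> + (pairing W Y\<^sub>0 / pairing e Y\<^sub>0) * e \<omega>)"
    have pairing_v: "pairing v Y = pairing v\<^sub>1 Y + (pairing W Y\<^sub>0 / pairing e Y\<^sub>0) * pairing e Y"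
      if "Y \<in> XXs" for Y
      unfolding v_def
      using pairing_lincomb_left[OF \<open>v\<^sub>1 \<in> XX\<close> \<open>e \<in> XX\<close> that, of 1 "pairing W Y\<^sub>0 / pairing e Y\<^sub>0"]
      by simp
    have "v \<in> mean_affine_dirs"
      unfolding v_def using v\<^sub>1(1) e(1) by (rule mean_affine_dirs_lincomb)
    moreover have "\<forall>Y\<in>insert Y\<^sub>0 F. pairing v Y = pairing X Y"
      using pairing_v pairing_W \<open>Y\<^sub>0 \<in> XXs\<close> F e(2,3) v\<^sub>1(2) by auto
    ultimately show ?thesis
      by blast
  next
    case False
    have "pairing W Y = 0" if "Y \<in> F" for Y
      using that pairing_W F v\<^sub>1(2) by auto
    then have "pairing W Y\<^sub>0 = 0"
      using pairing_kernel_extends[OF separating \<open>finite F\<close> F \<open>Y\<^sub>0 \<in> XXs\<close> _ \<open>W \<in> XX\<close>] False by blast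
    then show ?thesis
      using v\<^sub>1 pairing_W[OF \<open>Y\<^sub>0 \<in> XXs\<close>] by auto
  qed
qed

lemma \<phi>_le_mean_if_separating:
  assumes separating: "\<And>Y. Y \<in> XXs \<Longrightarrow> \<forall>v\<in>mean_affine_dirs. pairing v Y = 0 \<Longrightarrow> AE \<omega> in M. Y \<omega> = 0"
    and "X \<in> XX"
  shows "\<phi> X \<le> ereal (\<phi>\<^sub>0 + const_slope * expectation X)"
proof (rule lsc_weak_top_le[OF lsc \<open>X \<in> XX\<close>])
  fix F and \<epsilon> \<eta> :: real
  assume "finite F" "F \<subseteq> XXs" "0 < \<epsilon>" "0 < \<eta>"
  \<comment> \<open>Matching the pairing with the constant \<open>1\<close> as well fixes the expectation.\<close>
  obtain v where v: "v \<in> mean_affine_dirs" "\<forall>Y\<in>insert (\<lambda>_. 1) F. pairing v Y = pairing X Y"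
    using mean_affine_dirs_weakly_dense[OF separating, of "insert (\<lambda>_. 1) F" X]
      \<open>finite F\<close> \<open>F \<subseteq> XXs\<close> one_XXs \<open>X \<in> XX\<close> by auto
  then have "expectation v = expectation X"
    by (simp add: pairing_one)
  then have "\<phi> v \<le> ereal (\<phi>\<^sub>0 + const_slope * expectation X + \<eta>)"
    using \<phi>_mean_affine_dirs[OF v(1)] \<open>0 < \<eta>\<close> by simp
  moreover have "\<forall>Y\<in>F. \<bar>(\<integral>\<omega>. v \<omega> * Y \<omega> \<partial>M) - (\<integral>\<omega>. X \<omega> * Y \<omega> \<partial>M)\<bar> < \<epsilon>"
    using v(2) \<open>0 < \<epsilon>\<close> by (simp add: pairing_def)
  ultimately show "\<exists>X'\<in>XX. (\<forall>Y\<in>F. \<bar>(\<integral>\<omega>. X' \<omega> * Y \<omega> \<partial>M) - (\<integral>\<omega>. X \<omega> * Y \<omega> \<partial>M)\<bar> < \<epsilon>) \<and>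
      \<phi> X' \<le> ereal (\<phi>\<^sub>0 + const_slope * expectation X + \<eta>)"
    using mean_affine_dirs_subset[OF v(1)] by blast
qed

text \<open>Convexity between \<open>X\<close> and \<open>-X\<close> turns the upper bound into an equality.\<close>

lemma \<phi>_eq_if_le_mean:
  assumes upper: "\<And>X. X \<in> XX \<Longrightarrow> \<phi> X \<le> ereal (\<phi>\<^sub>0 + const_slope * expectation X)"
    and "X \<in> XX"
  shows "\<phi> X = ereal (const_slope * expectation X) + \<phi> (\<lambda>_. 0)"
proof -
  have "(\<lambda>\<omega>. (- 1) * X \<omega>) \<in> XX"
    using linear_subspace_rv_scale[OF XX \<open>X \<in> XX\<close>] .
  have "\<phi> (\<lambda>\<omega>. (1/2) * X \<omega> + (1 - 1/2) * ((- 1) * X \<omega>))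
      \<le> ereal (1/2) * \<phi> X + ereal (1 - 1/2) * \<phi> (\<lambda>\<omega>. (- 1) * X \<omega>)"
    by (rule convex_on_rvD[OF convex \<open>X \<in> XX\<close> \<open>(\<lambda>\<omega>. (- 1) * X \<omega>) \<in> XX\<close>]) auto
  moreover have "(\<lambda>\<omega>. (1/2) * X \<omega> + (1 - 1/2) * ((- 1) * X \<omega>)) = (\<lambda>_. 0::real)"
    by auto
  ultimately have midpoint: "ereal \<phi>\<^sub>0 \<le> ereal (1/2) * \<phi> X + ereal (1/2) * \<phi> (\<lambda>\<omega>. (- 1) * X \<omega>)"
    by (simp add: \<phi>_zero)
  have upper_X: "\<phi> X \<le> ereal (\<phi>\<^sub>0 + const_slope * expectation X)"
    using upper[OF \<open>X \<in> XX\<close>] .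
  have upper_minus_X: "\<phi> (\<lambda>\<omega>. (- 1) * X \<omega>) \<le> ereal (\<phi>\<^sub>0 - const_slope * expectation X)"
    using upper[OF \<open>(\<lambda>\<omega>. (- 1) * X \<omega>) \<in> XX\<close>] by simp
  obtain r where r: "\<phi> X = ereal r"
    using upper_X not_minf[OF \<open>X \<in> XX\<close>] by (cases "\<phi> X") auto
  obtain q where q: "\<phi> (\<lambda>\<omega>. (- 1) * X \<omega>) = ereal q"
    using upper_minus_X not_minf[OF \<open>(\<lambda>\<omega>. (- 1) * X \<omega>) \<in> XX\<close>] by (cases "\<phi> (\<lambda>\<omega>. (- 1) * X \<omega>)") auto
  have "r = \<phi>\<^sub>0 + const_slope * expectation X"
    using midpoint upper_X upper_minus_X r q by simp
  then show ?thesis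
    using r by (simp add: \<phi>_zero)
qed

lemma affine_along_nonconstant_imp_linear:
  assumes "Z \<in> XX" "nonconstant_rv M Z" "affine_along \<phi> (rv_span Z)" and "X \<in> XX"
  shows "\<phi> X = ereal (const_slope * expectation X) + \<phi> (\<lambda>_. 0)"
proof -
  obtain \<kappa> where "affine_dir Z \<kappa>"
    using affine_along_span_imp_affine_dir[OF assms(1,3)] .
  then have "\<phi> X' \<le> ereal (\<phi>\<^sub>0 + const_slope * expectation X')" if "X' \<in> XX" for X'
    using \<phi>_le_mean_if_separating mean_affine_dirs_annihilator assms(1,2) that by blast
  then show ?thesis
    using \<phi>_eq_if_le_mean \<open>X \<in> XX\<close> by blast
qed

lemma linear_imp_translation_invariant_along:
  assumes linear: "\<forall>X\<in>XX. \<phi> X = ereal (a * expectation X) + \<phi> (\<lambda>_. 0)" and "W \<in> XX"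
  shows "translation_invariant_along XX \<phi> (rv_span W)"
proof -
  have span: "U \<in> XX" if "U \<in> rv_span W" for U
    using that linear_subspace_rv_scale[OF XX \<open>W \<in> XX\<close>] unfolding rv_span_def by blast
  have \<phi>_eq: "\<phi> X = ereal (a * expectation X + \<phi>\<^sub>0)" if "X \<in> XX" for X
    using linear that by (simp add: \<phi>_zero)
  have "affine_along \<phi> (rv_span W)"
    unfolding affine_along_def
  proof (intro conjI ballI allI)
    show "\<phi> U < \<infinity>" if "U \<in> rv_span W" for U
      using \<phi>_eq span that by simp
    fix U V \<alpha> \<beta>
    assume "U \<in> rv_span W" "V \<in> rv_span W"
    then have "U \<in> XX" "V \<in> XX"
      using span by auto
    then have "expectation (\<lambda>\<omega>. \<alpha> * U \<omega> + \<beta> * V \<omega>) = \<alpha> * expectation U + \<beta> * expectation V"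
      using XX_integrable by simp
    then show "\<phi> (\<lambda>\<omega>. \<alpha> * U \<omega> + \<beta> * V \<omega>) - \<phi> (\<lambda>_. 0) =
        ereal \<alpha> * (\<phi> U - \<phi> (\<lambda>_. 0)) + ereal \<beta> * (\<phi> V - \<phi> (\<lambda>_. 0))"
      using \<phi>_eq[OF linear_subspace_rv_lincomb[OF XX \<open>U \<in> XX\<close> \<open>V \<in> XX\<close>]] \<phi>_eq \<open>U \<in> XX\<close> \<open>V \<in> XX\<close>
      by (simp add: \<phi>_zero algebra_simps)
  qed
  moreover have "\<phi> (\<lambda>\<omega>. X \<omega> + U \<omega>) = \<phi> X + \<phi> U - \<phi> (\<lambda>_. 0)" if "X \<in> XX" "U \<in> rv_span W" for X U
  proof -
    have "U \<in> XX"
      using span that(2) by blast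
    then have "expectation (\<lambda>\<omega>. X \<omega> + U \<omega>) = expectation X + expectation U"
      using XX_integrable that(1) by simp
    then show ?thesis
      using \<phi>_eq[OF linear_subspace_rv_add[OF XX that(1) \<open>U \<in> XX\<close>]] \<phi>_eq that(1) \<open>U \<in> XX\<close>
      by (simp add: \<phi>_zero algebra_simps)
  qed
  ultimately show ?thesis
    unfolding translation_invariant_along_def by blast
qed

end

theorem corollary4p8:
  fixes M :: "'a measure" and XX XXs :: "('a \<Rightarrow> real) set"
    and \<phi> :: "('a \<Rightarrow> real) \<Rightarrow> ereal"
  assumes "prob_space M" and "nonatomic M"
    and "linear_subspace_rv XX" and "linear_subspace_rv XXs"
    and "law_invariant_set M XX" and "law_invariant_set M XXs"
    and "\<forall>X\<in>XX. integrable M X" and "\<forall>Y\<in>XXs. integrable M Y"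
    and "Linf M \<subseteq> XX" and "Linf M \<subseteq> XXs"
    and "\<forall>X\<in>XX. \<forall>Y\<in>XXs. integrable M (\<lambda>\<omega>. X \<omega> * Y \<omega>)"
    and "\<forall>X\<in>XX. \<phi> X \<noteq> -\<infinity>"
    and "\<exists>X\<in>XX. \<phi> X < \<infinity>"
    and "convex_on_rv XX \<phi>"
    and "lsc_wrt (weak_top M XX XXs) \<phi>"
    and "law_invariant_fun M XX \<phi>"
    and "translation_invariant_along XX \<phi> (rv_span (\<lambda>_. 1))"
  shows "((\<exists>Z\<in>XX. nonconstant_rv M Z \<and> affine_along \<phi> (rv_span Z))
            \<longleftrightarrow> (\<exists>Z\<in>XX. nonconstant_rv M Z \<and> translation_invariant_along XX \<phi> (rv_span Z)))
       \<and> ((\<exists>Z\<in>XX. nonconstant_rv M Z \<and> translation_invariant_along XX \<phi> (rv_span Z))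
            \<longleftrightarrow> (\<exists>a::real. \<forall>X\<in>XX. \<phi> X = ereal (a * (\<integral>\<omega>. X \<omega> \<partial>M)) + \<phi> (\<lambda>_. 0)))"
proof -
  have "lsc_law_invariant_convex_axioms M XX XXs \<phi>"
  proof
    show "(\<lambda>_. c) \<in> XX" for c
      using const_in_Linf \<open>Linf M \<subseteq> XX\<close> by blast
    show "(\<lambda>_. 1) \<in> XXs"
      using const_in_Linf \<open>Linf M \<subseteq> XXs\<close> by blast
    show "affine_along \<phi> (rv_span (\<lambda>_. 1))"
      using \<open>translation_invariant_along XX \<phi> (rv_span (\<lambda>_. 1))\<close>
      by (simp add: translation_invariant_along_def)
  qed (use assms in simp_all)
  then interpret lsc_law_invariant_convex M XX XXs \<phi>
    by (intro lsc_law_invariant_convex.intro \<open>prob_space M\<close>)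
  let ?affine = "\<exists>Z\<in>XX. nonconstant_rv M Z \<and> affine_along \<phi> (rv_span Z)"
  let ?translation = "\<exists>Z\<in>XX. nonconstant_rv M Z \<and> translation_invariant_along XX \<phi> (rv_span Z)"
  let ?linear = "\<exists>a::real. \<forall>X\<in>XX. \<phi> X = ereal (a * (\<integral>\<omega>. X \<omega> \<partial>M)) + \<phi> (\<lambda>_. 0)"
  have "?affine \<Longrightarrow> ?linear"
    using affine_along_nonconstant_imp_linear by blast
  moreover obtain Z where "Z \<in> Linf M" "nonconstant_rv M Z"
    using nonatomic_nonconstant_Linf[OF nonatomic] .
  then have "?linear \<Longrightarrow> ?translation"
    using linear_imp_translation_invariant_along \<open>Linf M \<subseteq> XX\<close> by blast
  moreover have "?translation \<Longrightarrow> ?affine"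
    unfolding translation_invariant_along_def by blast
  ultimately show ?thesis
    by blast
qed

end
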